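(* If $\gamma>0$ is large enough, then almost surely, as $n\to\infty$, \[\mathbb{P}\left(\|\mathcal{X}_{T_{n+1}}\|>n^\gamma\,\middle|\,\mathbf{X}\right)=o(n^{-4/3})\quad\text{and}\quad \mathbb{P}\left(\|\mathcal{X}_{T_n}+Y_n\|>n^\gamma\,\middle|\,\mathbf{X}\right)=o(n^{-4/3}).\]
   Context: $\|\cdot\|$ is a norm on $\mathbb{R}^d$. Let $d\in\mathbb{N}$ and let $\Delta$ be a Borel random variable on $\mathbb{R}^d$; let $(\Delta_i)_{i\in\mathbb{N}}$ be independent copies of $\Delta$. Set $X_1=\Delta_1$ and for $n\ge2$ let $U_n$ be uniform on $\{1,\dots,n-1\}$ (independent) and $X_n=X_{U_n}+\Delta_n$. Let $\mathbf{X}:=((X_i)_{i\in\mathbb{N}},(U_i)_{i\ge2})$. Standing assumption: there exist $\alpha>0$ and a random variable $\Lambda$ on $\mathbb{R}^d$ with $n^{-\alpha}\sum_{i=1}^n\Delta_i\to\Lambda$ in distribution. Let $T_n:=\lfloor e^{3n^{1/3}}\rfloor$. All of the following are independent of each other and of $\mathbf{X}$: $(R_n)$ Bernoulli with parameters $(T_{n+1}-T_n)/T_{n+1}$; $(\tilde\Delta_n)$ copies of $\Delta$; $\mathcal{U}_n$ uniform on $\{1,\dots,n\}$. Set $Y_n:=R_n\tilde\Delta_n$ and $\mathcal{X}_n:=X_{\mathcal{U}_n}$. *)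

theory Defs
  imports "HOL-Probability.Probability" "HOL-Library.Landau_Symbols"
begin

text \<open>Index type for the primitive random variables of the model:
  Delta_i (i \<ge> 1), U_i (i \<ge> 2), R_n, tilde Delta_n, calligraphic U_n (n \<ge> 1).\<close>
datatype idx = IDelta nat | IU nat | IR nat | IDt nat | IUU nat

definition valid_idx :: "idx \<Rightarrow> bool" where
  "valid_idx i = (case i of IDelta k \<Rightarrow> 1 \<le> k | IU k \<Rightarrow> 2 \<le> k | IR k \<Rightarrow> 1 \<le> k
                  | IDt k \<Rightarrow> 1 \<le> k | IUU k \<Rightarrow> 1 \<le> k)"

definition events_of :: "'m measure \<Rightarrow> 'b measure \<Rightarrow> ('m \<Rightarrow> 'b) \<Rightarrow> 'm set set" where
  "events_of M N f = {f -` A \<inter> space M | A. A \<in> sets N}"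

definition T :: "nat \<Rightarrow> nat" where
  "T n = nat \<lfloor>exp (3 * real n powr (1/3))\<rfloor>"

end

theory Submission
  imports Defs "HOL-Real_Asymp.Real_Asymp"
begin

text \<open>
  Conditionally on the walk, X_{UU N} is a uniformly chosen vertex of the first N, so the
  conditional probabilities are (up to the extra increment in the second claim) the fraction of
  vertices i \<le> N with nrm (X i) > c.

  X i is the sum of the increments along the ancestral line of i. Since each step to a uniform
  parent halves the expected label, the line has more than m steps with probability at most
  i / 2^(m+1); otherwise nrm (X i) > (m + 1) x forces one of its m + 1 increments to exceed x.
  Convergence in distribution of n^(-alpha) S_n together with Ottaviani's maximal inequality
  bounds the tail of an increment polynomially, P(nrm Delta > x) \<le> C x^(-1/alpha).

  Taking m = n and c = n^gamma with gamma large, the expected fraction among the first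
  T_{n+1} \<le> exp (3 (n+1)^(1/3)) vertices is at most T_{n+1} / 2^(n+1) + (n+1) P(nrm Delta > c/(n+1)),
  which is O(n^(-3)). Since n^(4/3) n^(-3) is summable, the fractions are o(n^(-4/3)) almost surely.
\<close>

lemma one_minus_power_mult_le_one:
  fixes p :: real
  assumes "0 \<le> p" "p \<le> 1"
  shows "(1 - p) ^ n * (1 + real n * p) \<le> 1"
proof (induction n)
  case (Suc n)
  have "(1 - p) * (1 + real (Suc n) * p) \<le> 1 + real n * p"
    using assms by (simp add: algebra_simps)
  then have "(1 - p) ^ n * ((1 - p) * (1 + real (Suc n) * p)) \<le> (1 - p) ^ n * (1 + real n * p)"
    using assms by (intro mult_left_mono) auto
  with Suc show ?case by (simp add: mult_ac)
qed simp

lemma (in finite_measure) tendsto_measure_greater_nat: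
  assumes [measurable]: "f \<in> borel_measurable M"
  shows "(\<lambda>m::nat. measure M {w \<in> space M. real m < f w}) \<longlonglongrightarrow> 0"
proof -
  let ?A = "\<lambda>m::nat. {w \<in> space M. real m < f w}"
  have "(\<lambda>m. measure M (?A m)) \<longlonglongrightarrow> measure M (\<Inter>m. ?A m)"
    by (rule finite_Lim_measure_decseq) (auto simp: decseq_def)
  moreover have "(\<Inter>m. ?A m) = {}"
  proof safe
    fix w assume "w \<in> (\<Inter>m. ?A m)"
    then have "real (nat \<lceil>f w\<rceil>) < f w" by blast
    then show "w \<in> {}" by linarith
  qed
  ultimately show ?thesis by simp
qed

lemma AE_summable_if_summable_integral:
  fixes f :: "nat \<Rightarrow> 'a \<Rightarrow> real"
  assumes int: "\<And>n. integrable M (f n)" and nonneg: "\<And>n x. 0 \<le> f n x"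
    and sum: "summable (\<lambda>n. integral\<^sup>L M (f n))"
  shows "AE x in M. summable (\<lambda>n. f n x)"
proof -
  have [measurable]: "f n \<in> borel_measurable M" for n
    using int by blast
  have "(\<integral>\<^sup>+x. (\<Sum>n. ennreal (f n x)) \<partial>M) = (\<Sum>n. \<integral>\<^sup>+x. ennreal (f n x) \<partial>M)"
    by (rule nn_integral_suminf) measurable
  also have "\<dots> = (\<Sum>n. ennreal (integral\<^sup>L M (f n)))"
    using int nonneg by (intro suminf_cong nn_integral_eq_integral) auto
  also have "\<dots> = ennreal (\<Sum>n. integral\<^sup>L M (f n))"
    using sum nonneg by (intro suminf_ennreal2) (auto simp: integral_nonneg)
  finally have "AE x in M. (\<Sum>n. ennreal (f n x)) \<noteq> \<infinity>"
    by (intro nn_integral_PInf_AE) auto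
  then show ?thesis
    by (rule AE_mp) (use nonneg in \<open>auto intro: summable_suminf_not_top\<close>)
qed

lemma (in prob_space) AE_smallo_powr_if_summable:
  fixes Z :: "nat \<Rightarrow> 'a \<Rightarrow> real"
  assumes int: "\<And>n. integrable M (Z n)" and nonneg: "\<And>n w. 0 \<le> Z n w"
    and sum: "summable (\<lambda>n. real n powr a * expectation (Z n))"
  shows "AE w in M. (\<lambda>n. Z n w) \<in> o(\<lambda>n. real n powr (- a))"
proof -
  have "AE w in M. summable (\<lambda>n. real n powr a * Z n w)"
    using int nonneg sum by (intro AE_summable_if_summable_integral) auto
  then show ?thesis
  proof eventually_elim
    case (elim w)
    have "(\<lambda>n. Z n w / real n powr (- a)) \<longlonglongrightarrow> 0"
    proof (rule Lim_transform_eventually[OF summable_LIMSEQ_zero[OF elim]])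
      show "\<forall>\<^sub>F n in sequentially. real n powr a * Z n w = Z n w / real n powr (- a)"
        using eventually_gt_at_top[of 0] by eventually_elim (simp add: powr_minus divide_inverse_commute)
    qed
    then show ?case
      using eventually_gt_at_top[of 0] by (intro smalloI_tendsto) auto
  qed
qed

lemma (in prob_space) AE_smallo_if_expectation_le:
  fixes Z :: "nat \<Rightarrow> 'a \<Rightarrow> real"
  assumes int: "\<And>n. integrable M (Z n)" and nonneg: "\<And>n w. 0 \<le> Z n w"
    and le: "eventually (\<lambda>n. expectation (Z n) \<le> real n powr (-3)) sequentially"
  shows "AE w in M. (\<lambda>n. Z n w) \<in> o(\<lambda>n. real n powr (-4/3))"
proof -
  have "summable (\<lambda>n. real n powr (4/3) * expectation (Z n))"
  proof (rule summable_comparison_test_ev)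
    show "eventually (\<lambda>n. norm (real n powr (4/3) * expectation (Z n)) \<le> real n powr (-5/3)) sequentially"
      using le
    proof eventually_elim
      case (elim n)
      have "real n powr (4/3) * expectation (Z n) \<le> real n powr (4/3) * real n powr (-3)"
        using elim by (intro mult_left_mono) auto
      also have "\<dots> = real n powr (-5/3)"
        by (simp flip: powr_add)
      finally show ?case
        using nonneg by (simp add: integral_nonneg)
    qed
  qed (simp add: summable_real_powr_iff)
  then show ?thesis
    using AE_smallo_powr_if_summable[OF int nonneg, of "4/3"] by simp
qed

lemma smallo_if_eventually_le:
  fixes f g :: "'a \<Rightarrow> real"
  assumes "eventually (\<lambda>x. 0 \<le> f x \<and> f x \<le> g x) F" "g \<in> o[F](h)"
  shows "f \<in> o[F](h)"
proof (rule landau_o.big_small_trans[OF bigoI assms(2)])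
  show "eventually (\<lambda>x. norm (f x) \<le> 1 * norm (g x)) F"
    using assms(1) by eventually_elim auto
qed

lemma (in finite_measure) set_integral_indicator_eq_measure:
  "A \<in> sets M \<Longrightarrow> B \<in> sets M \<Longrightarrow> (\<integral>x\<in>A. indicator B x \<partial>M) = measure M (A \<inter> B)"
  unfolding set_lebesgue_integral_def
  by (simp add: indicator_inter_arith[symmetric] mult.commute)

lemma (in sigma_finite_subalgebra) real_cond_exp_indicator_not_sets:
  assumes "S \<subseteq> space M" "S \<notin> sets M"
  shows "AE w in M. real_cond_exp M F (indicator S) w = 0"
proof -
  have "(\<lambda>x. ennreal (indicator S x :: real)) \<notin> borel_measurable M"
  proof
    assume "(\<lambda>x. ennreal (indicator S x :: real)) \<in> borel_measurable M"
    then have "(\<lambda>x. ennreal (indicator S x :: real)) -` {1} \<inter> space M \<in> sets M"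
      by (rule measurable_sets) auto
    moreover have "(\<lambda>x. ennreal (indicator S x :: real)) -` {1} \<inter> space M = S"
      using assms by (auto simp: indicator_def)
    ultimately show False
      using assms by simp
  qed
  then have pos: "nn_cond_exp M F (\<lambda>x. ennreal (indicator S x :: real)) = (\<lambda>_. 0)"
    by (simp add: nn_cond_exp_def)
  have neg: "(\<lambda>x. ennreal (- indicator S x :: real)) = (\<lambda>x. 0)"
    by (auto simp: indicator_def ennreal_neg)
  have "AE x in M. 0 = nn_cond_exp M F (\<lambda>x. 0) x"
    by (rule nn_cond_exp_F_meas) simp
  then show ?thesis
    unfolding real_cond_exp_def pos neg by eventually_elim simp
qed

lemma (in prob_space) real_cond_exp_indicator_bound:
  assumes F: "sigma_finite_subalgebra M F" and S: "S \<subseteq> space M" and S': "S' \<in> events"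
    and sub: "AE w in M. w \<in> S \<longrightarrow> w \<in> S'"
    and le: "AE w in M. real_cond_exp M F (indicator S') w \<le> g w"
    and g: "\<And>w. 0 \<le> g w"
  shows "AE w in M. 0 \<le> real_cond_exp M F (indicator S) w \<and> real_cond_exp M F (indicator S) w \<le> g w"
proof -
  interpret F: sigma_finite_subalgebra M F by (rule F)
  show ?thesis
  proof (cases "S \<in> events")
    case True
    have "AE w in M. real_cond_exp M F (indicator S) w \<le> real_cond_exp M F (indicator S') w"
      using sub True S'
      by (intro F.real_cond_exp_mono) (auto elim!: AE_mp intro!: integrable_const_bound[where B=1])
    moreover have "AE w in M. 0 \<le> real_cond_exp M F (indicator S) w"
      using True by (intro F.real_cond_exp_pos) auto
    ultimately show ?thesis
      using le by eventually_elim auto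
  next
    case False
    show ?thesis
      using F.real_cond_exp_indicator_not_sets[OF S False] by eventually_elim (simp add: g)
  qed
qed

lemma (in prob_space) real_cond_exp_indicator_Un_le:
  assumes F: "sigma_finite_subalgebra M F" and A: "A \<in> events" and B: "B \<in> events"
  shows "AE w in M. real_cond_exp M F (indicator (A \<union> B)) w
    \<le> real_cond_exp M F (indicator A) w + real_cond_exp M F (indicator B) w"
proof -
  interpret F: sigma_finite_subalgebra M F by (rule F)
  have int: "integrable M (indicator A :: 'a \<Rightarrow> real)" "integrable M (indicator B :: 'a \<Rightarrow> real)"
    "integrable M (indicator (A \<union> B) :: 'a \<Rightarrow> real)"
    using A B by (auto simp: less_top[symmetric])
  then have "integrable M (\<lambda>w. indicator A w + indicator B w :: real)"
    by (intro Bochner_Integration.integrable_add)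
  with int have "AE w in M. real_cond_exp M F (indicator (A \<union> B)) w
      \<le> real_cond_exp M F (\<lambda>w. indicator A w + indicator B w) w"
    by (intro F.real_cond_exp_mono) (auto simp: indicator_def)
  moreover have "AE w in M. real_cond_exp M F (\<lambda>w. indicator A w + indicator B w) w =
      real_cond_exp M F (indicator A) w + real_cond_exp M F (indicator B) w"
    using int by (intro F.real_cond_exp_add)
  ultimately show ?thesis
    by eventually_elim simp
qed

lemma sum_of_nat_atLeastLessThan_real: "(\<Sum>k\<in>{1..<n}. real k) = real n * (real n - 1) / 2"
proof (induction n)
  case (Suc n)
  then show ?case
    by (cases "n = 0") (auto simp: atLeastLessThanSuc field_simps)
qed simp

lemma T_ge_1: "1 \<le> T n"
proof -
  have "1 \<le> exp (3 * real n powr (1/3))" by simp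
  then show ?thesis unfolding T_def by (metis floor_mono floor_one nat_mono nat_one_as_int)
qed

lemma T_le_exp: "m \<le> n + 1 \<Longrightarrow> real (T m) \<le> exp (3 * (real n + 1) powr (1/3))"
proof -
  assume "m \<le> n + 1"
  then have "real m powr (1/3) \<le> (real n + 1) powr (1/3)"
    by (intro powr_mono2) auto
  moreover have "real (T m) \<le> exp (3 * real m powr (1/3))"
    unfolding T_def by (simp add: of_nat_nat)
  ultimately show ?thesis by (smt (verit) exp_le_cancel_iff)
qed

lemma eventually_T_le_power_two:
  "eventually (\<lambda>n. \<forall>m \<le> n + 1. real (T m) / 2 ^ Suc n \<le> real n powr (-3) / 2) sequentially"
proof -
  have "eventually (\<lambda>n::nat. exp (3 * (real n + 1) powr (1/3)) / 2 powr (real n + 1)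
          \<le> real n powr (-3) / 2) sequentially"
    by real_asymp
  then show ?thesis
  proof eventually_elim
    case (elim n)
    have "(2::real) powr (real n + 1) = 2 ^ Suc n"
      using powr_realpow[of 2 "Suc n"] by (simp add: add.commute)
    then show ?case
      using elim T_le_exp by (smt (verit) divide_right_mono zero_le_power)
  qed
qed

lemma powr_tail_le_at:
  fixes p :: "real \<Rightarrow> real"
  assumes tail: "\<And>x. x \<ge> x\<^sub>0 \<Longrightarrow> p x \<le> C * x powr (-\<beta>)"
    and C: "C \<ge> 0" and \<beta>: "\<beta> > 0" and \<gamma>: "\<gamma> \<ge> 2" and r: "1 \<le> r" "4 * x\<^sub>0 \<le> r"
  shows "p (r powr \<gamma> / (2 * (r + 1))) \<le> C * 4 powr \<beta> * r powr (- ((\<gamma> - 1) * \<beta>))"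
proof -
  define z where "z = r powr (\<gamma> - 1) / 4"
  have "z = r powr \<gamma> / (4 * r)"
    using r by (simp add: z_def powr_diff)
  also have "\<dots> \<le> r powr \<gamma> / (2 * (r + 1))"
    using r by (intro divide_left_mono) auto
  finally have z_le: "z \<le> r powr \<gamma> / (2 * (r + 1))" .
  have "r powr 1 \<le> r powr (\<gamma> - 1)"
    using r \<gamma> by (intro powr_mono) auto
  then have "x\<^sub>0 \<le> z"
    using r by (simp add: z_def)
  have "p (r powr \<gamma> / (2 * (r + 1))) \<le> C * (r powr \<gamma> / (2 * (r + 1))) powr (-\<beta>)"
    using tail \<open>x\<^sub>0 \<le> z\<close> z_le by simp
  also have "\<dots> \<le> C * z powr (-\<beta>)"
    using z_le r \<beta> C by (intro mult_left_mono powr_mono2') (auto simp: z_def)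
  also have "z powr (-\<beta>) = (r powr (\<gamma> - 1)) powr (-\<beta>) / 4 powr (-\<beta>)"
    using r by (simp add: z_def powr_divide)
  also have "\<dots> = 4 powr \<beta> * r powr (- ((\<gamma> - 1) * \<beta>))"
    by (simp add: powr_powr powr_minus_divide)
  finally show ?thesis
    by (simp add: mult.assoc)
qed

lemma eventually_powr_tail_small:
  fixes p :: "real \<Rightarrow> real"
  assumes tail: "\<And>x. x \<ge> x\<^sub>0 \<Longrightarrow> p x \<le> C * x powr (-\<beta>)"
    and C: "C \<ge> 0" and \<beta>: "\<beta> > 0" and \<gamma>: "\<gamma> \<ge> 2" "\<gamma> * \<beta> \<ge> 6 + \<beta>"
  shows "eventually (\<lambda>n. (real n + 1) * p (real n powr \<gamma> / (2 * (real n + 1)))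
           \<le> real n powr (-3) / 2) sequentially"
proof -
  define K where "K = C * 4 powr \<beta>"
  have "eventually (\<lambda>n. max 1 (max (4 * x\<^sub>0) (4 * K)) \<le> real n) sequentially"
    using filterlim_real_sequentially unfolding filterlim_at_top by blast
  then show ?thesis
  proof eventually_elim
    case (elim n)
    define r where "r = real n"
    have r: "1 \<le> r" "4 * x\<^sub>0 \<le> r" "4 * K \<le> r"
      using elim by (auto simp: r_def)
    have "(r + 1) * p (r powr \<gamma> / (2 * (r + 1))) \<le> (r + 1) * (K * r powr (- ((\<gamma> - 1) * \<beta>)))"
      using powr_tail_le_at[OF tail C \<beta> \<gamma>(1) r(1,2)] r by (intro mult_left_mono) (auto simp: K_def)
    also have "\<dots> \<le> (2 * r) * (K * r powr (- ((\<gamma> - 1) * \<beta>)))"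
      using r C by (intro mult_right_mono) (auto simp: K_def)
    also have "\<dots> = 2 * K * r powr (1 - (\<gamma> - 1) * \<beta>)"
      using r by (simp add: powr_diff powr_minus divide_inverse)
    also have "\<dots> \<le> 2 * K * r powr (-5)"
      using r \<gamma> C by (intro mult_left_mono powr_mono) (auto simp: K_def algebra_simps)
    also have "\<dots> \<le> r powr (-5) * (r * r) / 2"
    proof -
      have "4 * K * 1 \<le> r * r"
        using r by (intro mult_mono) auto
      then have "(4 * K) * r powr (-5) \<le> (r * r) * r powr (-5)"
        by (intro mult_right_mono) auto
      then show ?thesis
        by (simp add: mult_ac)
    qed
    also have "r powr (-5) * (r * r) = r powr (-5) * r powr 2"
      using r by (simp add: powr_numeral power2_eq_square)
    also have "\<dots> = r powr (-3)"
      by (simp flip: powr_add)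
    finally show ?case
      by (simp add: r_def)
  qed
qed

lemma antimono_powr_tail_interpolate:
  fixes p :: "real \<Rightarrow> real"
  assumes antimono: "\<And>x y. x \<le> y \<Longrightarrow> p y \<le> p x" and \<alpha>: "0 < \<alpha>" and c: "0 < c"
    and tail: "\<And>n. n \<ge> 1 \<Longrightarrow> p (c * real n powr \<alpha>) \<le> 1 / real n"
  shows "\<forall>x\<ge>c. p x \<le> 2 * c powr (1 / \<alpha>) * x powr (- (1 / \<alpha>))"
proof safe
  fix x assume x: "c \<le> x"
  define y where "y = (x / c) powr (1 / \<alpha>)"
  have y: "y \<ge> 1"
    unfolding y_def using x c \<alpha> by (intro ge_one_powr_ge_zero) auto
  define n where "n = nat \<lfloor>y\<rfloor>"
  have "n \<ge> 1" "real n \<le> y" "y < real n + 1"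
    unfolding n_def using y by linarith+
  then have n: "n \<ge> 1" "real n \<le> y" "y \<le> 2 * real n"
    by linarith+
  have "real n powr \<alpha> \<le> y powr \<alpha>"
    using n \<alpha> by (intro powr_mono2) auto
  also have "y powr \<alpha> = x / c"
    unfolding y_def using \<alpha> x c by (simp add: powr_powr)
  finally have "c * real n powr \<alpha> \<le> x"
    using c by (simp add: field_simps)
  then have "p x \<le> p (c * real n powr \<alpha>)"
    by (rule antimono)
  also have "\<dots> \<le> 1 / real n"
    using n by (intro tail) auto
  also have "\<dots> \<le> 2 / y"
    using n y by (simp add: field_simps)
  also have "2 / y = 2 * c powr (1 / \<alpha>) * x powr (- (1 / \<alpha>))"
    unfolding y_def using c x by (simp add: powr_divide powr_minus field_simps)
  finally show "p x \<le> 2 * c powr (1 / \<alpha>) * x powr (- (1 / \<alpha>))" .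
qed

locale vector_norm =
  fixes nrm :: "'a::euclidean_space \<Rightarrow> real"
  assumes nrm_zero: "\<And>x. nrm x = 0 \<longleftrightarrow> x = 0"
    and nrm_triangle: "\<And>x y. nrm (x + y) \<le> nrm x + nrm y"
    and nrm_scale: "\<And>c x. nrm (c *\<^sub>R x) = \<bar>c\<bar> * nrm x"
begin

lemma nrm_0 [simp]: "nrm 0 = 0"
  using nrm_zero by simp

lemma nrm_minus: "nrm (- x) = nrm x"
  using nrm_scale[of "-1" x] by simp

lemma nrm_nonneg: "0 \<le> nrm x"
  using nrm_triangle[of x "- x"] nrm_minus[of x] by simp

lemma nrm_diff_le: "nrm (x - y) \<le> nrm x + nrm y"
  using nrm_triangle[of x "- y"] nrm_minus[of y] by simp

lemma nrm_sum_le: "nrm (sum f A) \<le> (\<Sum>i\<in>A. nrm (f i))"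
  by (induction A rule: infinite_finite_induct) (auto intro: order_trans[OF nrm_triangle])

lemma nrm_le_norm: "nrm x \<le> (\<Sum>b\<in>Basis. nrm b) * norm x"
proof -
  have "nrm x = nrm (\<Sum>b\<in>Basis. (x \<bullet> b) *\<^sub>R b)"
    by (simp add: euclidean_representation)
  also have "\<dots> \<le> (\<Sum>b\<in>Basis. \<bar>x \<bullet> b\<bar> * nrm b)"
    using nrm_sum_le[of "\<lambda>b. (x \<bullet> b) *\<^sub>R b" Basis] by (simp add: nrm_scale)
  also have "\<dots> \<le> (\<Sum>b\<in>Basis. norm x * nrm b)"
    by (intro sum_mono mult_right_mono Basis_le_norm nrm_nonneg) auto
  finally show ?thesis
    by (simp add: sum_distrib_left mult.commute)
qed

lemma continuous_on_nrm: "continuous_on UNIV nrm"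
proof (rule lipschitz_on_continuous_on)
  show "(\<Sum>b\<in>Basis. nrm b)-lipschitz_on UNIV nrm"
  proof (rule lipschitz_onI)
    fix x y :: 'a
    have "nrm x - nrm y \<le> nrm (x - y)" "nrm y - nrm x \<le> nrm (x - y)"
      using nrm_triangle[of "x - y" y] nrm_triangle[of "y - x" x] nrm_minus[of "x - y"] by simp_all
    then show "dist (nrm x) (nrm y) \<le> (\<Sum>b\<in>Basis. nrm b) * dist x y"
      using nrm_le_norm[of "x - y"] by (simp add: dist_real_def dist_norm)
  qed (simp add: sum_nonneg nrm_nonneg)
qed

lemma borel_measurable_nrm [measurable]: "nrm \<in> borel_measurable borel"
  using continuous_on_nrm by (rule borel_measurable_continuous_onI)

text \<open>A continuous bounded test function for convergence in distribution, lying between the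
  indicators of {K + 1 < nrm y} and {K < nrm y}.\<close>
definition ramp :: "real \<Rightarrow> 'a \<Rightarrow> real" where
  "ramp K y = min 1 (max 0 (nrm y - K))"

lemma continuous_on_ramp: "continuous_on UNIV (ramp K)"
  unfolding ramp_def[abs_def] by (intro continuous_intros continuous_on_compose2[OF continuous_on_nrm]) auto

lemma borel_measurable_ramp [measurable]: "ramp K \<in> borel_measurable borel"
  using continuous_on_ramp by (rule borel_measurable_continuous_onI)

lemma ramp_bounds: "0 \<le> ramp K y" "ramp K y \<le> 1"
  by (auto simp: ramp_def)

lemma bounded_range_ramp: "bounded (range (ramp K))"
  using ramp_bounds unfolding bounded_iff by (intro exI[of _ 1]) auto

lemma ramp_eq_1: "K + 1 < nrm y \<Longrightarrow> ramp K y = 1"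
  by (simp add: ramp_def)

lemma ramp_eq_0: "nrm y \<le> K \<Longrightarrow> ramp K y = 0"
  by (simp add: ramp_def)

lemma ex_integral_ramp_less:
  assumes L: "prob_space L" and sets_L: "sets L = sets borel" and e: "0 < e"
  shows "\<exists>K. (\<integral>y. ramp K y \<partial>L) < e"
proof -
  interpret L: prob_space L by (rule L)
  have space_L: "space L = UNIV"
    using sets_eq_imp_space_eq[OF sets_L] by simp
  have [measurable]: "nrm \<in> borel_measurable L"
    unfolding measurable_cong_sets[OF sets_L refl] by measurable
  have "(\<lambda>m::nat. L.prob {y \<in> space L. real m < nrm y}) \<longlonglongrightarrow> 0"
    by (rule L.tendsto_measure_greater_nat) measurable
  then have "eventually (\<lambda>m. L.prob {y \<in> space L. real m < nrm y} < e) sequentially"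
    using e by (rule order_tendstoD)
  then obtain m where m: "L.prob {y \<in> space L. real m < nrm y} < e"
    by (auto simp: eventually_sequentially)
  have "(\<integral>y. ramp m y \<partial>L) \<le> (\<integral>y. indicator {y \<in> space L. real m < nrm y} y \<partial>L)"
  proof (rule integral_mono)
    have "ramp m \<in> borel_measurable L"
      unfolding measurable_cong_sets[OF sets_L refl] by measurable
    then show "integrable L (ramp m)"
      using ramp_bounds by (intro L.integrable_const_bound[where B=1]) auto
    show "integrable L (indicator {y \<in> space L. real m < nrm y} :: 'a \<Rightarrow> real)"
      by (intro L.integrable_const_bound[where B=1]) auto
    show "ramp m y \<le> indicator {y \<in> space L. real m < nrm y} y" for y
      using ramp_bounds[of m y] by (cases "m < nrm y") (simp_all add: ramp_eq_0 space_L)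
  qed
  also have "\<dots> = L.prob {y \<in> space L. real m < nrm y}"
    by (simp add: L.emeasure_eq_measure)
  finally show ?thesis
    using m by (intro exI[of _ "real m"]) simp
qed

end

section \<open>The walk indexed by a random recursive tree\<close>

text \<open>A parent map p with p n < n for n \<ge> 2 describes a tree rooted at 1: depth_ge p j n says
  that the ancestral line n, p n, p (p n), ... has at least j edges, and ancestral_line_hits
  checks P on its first m + 1 vertices.\<close>
primrec depth_ge :: "(nat \<Rightarrow> nat) \<Rightarrow> nat \<Rightarrow> nat \<Rightarrow> bool" where
  "depth_ge p 0 n = True"
| "depth_ge p (Suc j) n = (2 \<le> n \<and> depth_ge p j (p n))"

primrec ancestral_line_hits :: "(nat \<Rightarrow> bool) \<Rightarrow> (nat \<Rightarrow> nat) \<Rightarrow> nat \<Rightarrow> nat \<Rightarrow> bool" where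
  "ancestral_line_hits P p 0 n = P n"
| "ancestral_line_hits P p (Suc m) n = (P n \<or> (2 \<le> n \<and> ancestral_line_hits P p m (p n)))"

lemma Int_stable_events_of: "Int_stable (events_of M N f)"
  unfolding Int_stable_def events_of_def
proof safe
  fix A B assume "A \<in> sets N" "B \<in> sets N"
  then show "\<exists>C. f -` A \<inter> space M \<inter> (f -` B \<inter> space M) = f -` C \<inter> space M \<and> C \<in> sets N"
    by (intro exI[of _ "A \<inter> B"]) auto
qed

lemma events_ofI: "A \<in> sets N \<Longrightarrow> f -` A \<inter> space M \<in> events_of M N f"
  unfolding events_of_def by auto

lemma events_of_subset: "f \<in> measurable M N \<Longrightarrow> events_of M N f \<subseteq> sets M"
  unfolding events_of_def by (auto simp: measurable_sets)

text \<open>The law of R is not assumed: R only switches the extra increment Dt on or off, and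
  nrm Dt bounds its effect either way.\<close>
locale tree_indexed_walk = prob_space M + vector_norm nrm
  for M :: "'m measure" and nrm :: "'a::euclidean_space \<Rightarrow> real" +
  fixes Delta :: "nat \<Rightarrow> 'm \<Rightarrow> 'a"
    and U :: "nat \<Rightarrow> 'm \<Rightarrow> nat"
    and X :: "nat \<Rightarrow> 'm \<Rightarrow> 'a"
    and R :: "nat \<Rightarrow> 'm \<Rightarrow> bool"
    and Dt :: "nat \<Rightarrow> 'm \<Rightarrow> 'a"
    and UU :: "nat \<Rightarrow> 'm \<Rightarrow> nat"
  assumes Delta_meas: "\<And>i. Delta i \<in> borel_measurable M"
    and U_meas: "\<And>i. U i \<in> measurable M (count_space UNIV)"
    and R_meas: "\<And>n. R n \<in> measurable M (count_space UNIV)"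
    and Dt_meas: "\<And>n. Dt n \<in> borel_measurable M"
    and UU_meas: "\<And>n. UU n \<in> measurable M (count_space UNIV)"
    and Delta_iid: "\<And>i. 1 \<le> i \<Longrightarrow> distr M borel (Delta i) = distr M borel (Delta 1)"
    and Dt_dist: "\<And>n. 1 \<le> n \<Longrightarrow> distr M borel (Dt n) = distr M borel (Delta 1)"
    and U_dist: "\<And>n. 2 \<le> n \<Longrightarrow>
        distr M (count_space UNIV) (U n) = measure_pmf (pmf_of_set {1..n-1})"
    and U_range: "\<And>n \<omega>. 2 \<le> n \<Longrightarrow> \<omega> \<in> space M \<Longrightarrow> U n \<omega> \<in> {1..n-1}"
    and UU_dist: "\<And>n. 1 \<le> n \<Longrightarrow>
        distr M (count_space UNIV) (UU n) = measure_pmf (pmf_of_set {1..n})"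
    and indep: "indep_sets
        (\<lambda>i. case i of
            IDelta k \<Rightarrow> events_of M borel (Delta k)
          | IU k \<Rightarrow> events_of M (count_space UNIV) (U k)
          | IR k \<Rightarrow> events_of M (count_space UNIV) (R k)
          | IDt k \<Rightarrow> events_of M borel (Dt k)
          | IUU k \<Rightarrow> events_of M (count_space UNIV) (UU k))
        {i. valid_idx i}"
    and X1: "\<And>\<omega>. \<omega> \<in> space M \<Longrightarrow> X 1 \<omega> = Delta 1 \<omega>"
    and Xn: "\<And>n \<omega>. 2 \<le> n \<Longrightarrow> \<omega> \<in> space M \<Longrightarrow> X n \<omega> = X (U n \<omega>) \<omega> + Delta n \<omega>"
begin

lemmas [measurable] = Delta_meas Dt_meas U_meas UU_meas

definition prim_events :: "idx \<Rightarrow> 'm set set" where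
  "prim_events i = (case i of
            IDelta k \<Rightarrow> events_of M borel (Delta k)
          | IU k \<Rightarrow> events_of M (count_space UNIV) (U k)
          | IR k \<Rightarrow> events_of M (count_space UNIV) (R k)
          | IDt k \<Rightarrow> events_of M borel (Dt k)
          | IUU k \<Rightarrow> events_of M (count_space UNIV) (UU k))"

lemma prim_events_subset_events: "prim_events i \<subseteq> events"
  unfolding prim_events_def
  by (cases i) (simp_all add: events_of_subset Delta_meas U_meas R_meas Dt_meas UU_meas)

definition prim_sigma :: "idx set \<Rightarrow> 'm measure" where
  "prim_sigma S = sigma (space M) (\<Union>i\<in>S. prim_events i)"

lemma space_prim_sigma [simp]: "space (prim_sigma S) = space M"
  using prim_events_subset_events sets.sets_into_space
  unfolding prim_sigma_def by (subst space_measure_of_conv) blast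

lemma sets_prim_sigma: "sets (prim_sigma S) = sigma_sets (space M) (\<Union>i\<in>S. prim_events i)"
  using prim_events_subset_events sets.sets_into_space
  unfolding prim_sigma_def by (subst sets_measure_of) blast+

lemma sets_prim_sigma_subset: "sets (prim_sigma S) \<subseteq> events"
  unfolding sets_prim_sigma using prim_events_subset_events
  by (intro sets.sigma_sets_subset) auto

lemma prim_sigma_events: "A \<in> sets (prim_sigma S) \<Longrightarrow> A \<in> events"
  using sets_prim_sigma_subset by blast

lemma Int_stable_prim_events: "Int_stable (prim_events i)"
  unfolding prim_events_def by (cases i) (auto simp: Int_stable_events_of)

lemma prob_Int_prim_sigma:
  assumes "S1 \<subseteq> {i. valid_idx i}" "S2 \<subseteq> {i. valid_idx i}" "S1 \<inter> S2 = {}"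
    and "A \<in> sets (prim_sigma S1)" "B \<in> sets (prim_sigma S2)"
  shows "prob (A \<inter> B) = prob A * prob B"
proof -
  let ?I = "\<lambda>b. if b then S1 else S2"
  have "indep_sets prim_events (\<Union>b. ?I b)"
    by (rule indep_sets_mono_index[OF _ indep[folded prim_events_def[abs_def]]]) (use assms in auto)
  then have "indep_sets (\<lambda>b. sigma_sets (space M) (\<Union>i\<in>?I b. prim_events i)) UNIV"
    by (rule indep_sets_collect_sigma)
      (use assms in \<open>auto simp: Int_stable_prim_events disjoint_family_on_def\<close>)
  moreover have "(\<lambda>b. sigma_sets (space M) (\<Union>i\<in>?I b. prim_events i))
      = case_bool (sets (prim_sigma S1)) (sets (prim_sigma S2))"
    by (rule ext) (simp add: sets_prim_sigma split: bool.split)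
  ultimately have "indep_set (sets (prim_sigma S1)) (sets (prim_sigma S2))"
    by (simp add: indep_set_def)
  then show ?thesis
    using assms indep_setD by blast
qed

lemma measurable_prim_sigmaI:
  assumes "i \<in> S" "f \<in> space M \<rightarrow> space N"
    and "\<And>A. A \<in> sets N \<Longrightarrow> f -` A \<inter> space M \<in> prim_events i"
  shows "f \<in> measurable (prim_sigma S) N"
  by (rule measurableI) (use assms in \<open>auto simp: sets_prim_sigma\<close>)

lemma Delta_prim_sigma: "IDelta k \<in> S \<Longrightarrow> Delta k \<in> borel_measurable (prim_sigma S)"
  by (rule measurable_prim_sigmaI) (auto simp: prim_events_def events_ofI)

lemma U_prim_sigma: "IU k \<in> S \<Longrightarrow> U k \<in> measurable (prim_sigma S) (count_space UNIV)"
  by (rule measurable_prim_sigmaI) (auto simp: prim_events_def events_ofI)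

lemma UU_prim_sigma: "IUU k \<in> S \<Longrightarrow> UU k \<in> measurable (prim_sigma S) (count_space UNIV)"
  by (rule measurable_prim_sigmaI) (auto simp: prim_events_def events_ofI)

lemma Dt_prim_sigma: "IDt k \<in> S \<Longrightarrow> Dt k \<in> borel_measurable (prim_sigma S)"
  by (rule measurable_prim_sigmaI) (auto simp: prim_events_def events_ofI)

lemma X_measurable:
  assumes N: "space N = space M" and "1 \<le> n"
    and "\<And>k. 1 \<le> k \<Longrightarrow> k \<le> n \<Longrightarrow> Delta k \<in> borel_measurable N"
    and "\<And>k. 2 \<le> k \<Longrightarrow> k \<le> n \<Longrightarrow> U k \<in> measurable N (count_space UNIV)"
  shows "X n \<in> borel_measurable N"
  using assms(2-)
proof (induction n rule: less_induct)
  case (less n)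
  show ?case
  proof (cases "n = 1")
    case True
    then show ?thesis
      using less.prems X1 N by (subst measurable_cong[where g="Delta 1"]) auto
  next
    case False
    then have n: "2 \<le> n"
      using less.prems by auto
    have [measurable]: "U n \<in> measurable N (count_space UNIV)" "Delta n \<in> borel_measurable N"
      "\<And>k. k \<in> {1..<n} \<Longrightarrow> X k \<in> borel_measurable N"
      using less n by auto
    have "X n w = (\<Sum>k\<in>{1..<n}. if U n w = k then X k w else 0) + Delta n w" if "w \<in> space N" for w
    proof -
      have "U n w \<in> {1..<n}"
        using U_range[OF n] that N by fastforce
      then show ?thesis
        using Xn[OF n] that N by (simp add: sum.delta)
    qed
    moreover have "(\<lambda>w. (\<Sum>k\<in>{1..<n}. if U n w = k then X k w else 0) + Delta n w) \<in> borel_measurable N"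
      by measurable
    ultimately show ?thesis
      by (subst measurable_cong) auto
  qed
qed

definition walk_idx :: "idx set" where
  "walk_idx = {IDelta k | k. 1 \<le> k} \<union> {IU k | k. 2 \<le> k}"

lemma walk_idx_valid: "walk_idx \<subseteq> {i. valid_idx i}"
  unfolding walk_idx_def valid_idx_def by auto

lemma X_prim_sigma_walk_idx: "1 \<le> n \<Longrightarrow> X n \<in> borel_measurable (prim_sigma walk_idx)"
  by (rule X_measurable) (auto simp: walk_idx_def intro!: Delta_prim_sigma U_prim_sigma)

section \<open>Ancestral lines\<close>

lemma nrm_X_le_if_shallow:
  assumes w: "w \<in> space M" and "1 \<le> n" and x: "0 \<le> x"
    and "\<not> ancestral_line_hits (\<lambda>k. x < nrm (Delta k w)) (\<lambda>k. U k w) m n"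
    and "\<not> depth_ge (\<lambda>k. U k w) (Suc m) n"
  shows "nrm (X n w) \<le> (real m + 1) * x"
  using assms(2,4,5)
proof (induction m arbitrary: n)
  case 0
  then have "n = 1"
    by simp
  with 0 show ?case
    using X1[OF w] by simp
next
  case (Suc m)
  show ?case
  proof (cases "n = 1")
    case True
    then have "nrm (X n w) \<le> 1 * x"
      using Suc.prems X1[OF w] by simp
    also have "\<dots> \<le> (real (Suc m) + 1) * x"
      using x by (intro mult_right_mono) auto
    finally show ?thesis .
  next
    case False
    then have n: "2 \<le> n"
      using Suc.prems by auto
    have "nrm (X (U n w) w) \<le> (real m + 1) * x"
      using Suc.prems n U_range[OF n w] by (intro Suc.IH) auto
    moreover have "nrm (Delta n w) \<le> x"
      using Suc.prems by auto
    ultimately show ?thesis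
      using Xn[OF n w] nrm_triangle[of "X (U n w) w" "Delta n w"] by (simp add: algebra_simps)
  qed
qed

lemma U_eq_prim_sigma: "IU n \<in> S \<Longrightarrow> {w \<in> space M. U n w = k} \<in> sets (prim_sigma S)"
  using measurable_sets[OF U_prim_sigma, of n S "{k}"] by (simp add: vimage_def Int_def conj_commute)

lemma prob_U_eq:
  assumes "2 \<le> n" "k \<in> {1..n-1}"
  shows "prob {w \<in> space M. U n w = k} = 1 / (real n - 1)"
proof -
  have "prob {w \<in> space M. U n w = k} = measure (distr M (count_space UNIV) (U n)) {k}"
    using U_meas by (subst measure_distr) (auto simp: vimage_def Int_def conj_commute)
  also have "\<dots> = 1 / (real n - 1)"
    using U_dist[OF assms(1)] assms by (simp add: measure_pmf_single of_nat_diff)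
  finally show ?thesis .
qed

lemma prob_UN_U_eq_Int_le:
  assumes n: "2 \<le> n"
    and E: "\<And>k. k \<in> {1..<n} \<Longrightarrow> E k \<in> sets (prim_sigma (S k))"
    and S: "\<And>k. k \<in> {1..<n} \<Longrightarrow> S k \<subseteq> {i. valid_idx i} \<and> IU n \<notin> S k"
  shows "prob (\<Union>k\<in>{1..<n}. {w \<in> space M. U n w = k} \<inter> E k) \<le> (\<Sum>k\<in>{1..<n}. prob (E k)) / (real n - 1)"
proof -
  have U: "{w \<in> space M. U n w = k} \<in> sets (prim_sigma {IU n})" for k
    by (intro U_eq_prim_sigma) auto
  have "prob (\<Union>k\<in>{1..<n}. {w \<in> space M. U n w = k} \<inter> E k)
      \<le> (\<Sum>k\<in>{1..<n}. prob ({w \<in> space M. U n w = k} \<inter> E k))"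
    using prim_sigma_events[OF U] prim_sigma_events[OF E]
    by (intro finite_measure_subadditive_finite) auto
  also have "\<dots> = (\<Sum>k\<in>{1..<n}. prob (E k) / (real n - 1))"
  proof (rule sum.cong[OF refl])
    fix k assume k: "k \<in> {1..<n}"
    have "prob ({w \<in> space M. U n w = k} \<inter> E k) = prob {w \<in> space M. U n w = k} * prob (E k)"
      using n S[OF k] by (intro prob_Int_prim_sigma[OF _ _ _ U E[OF k]]) (auto simp: valid_idx_def)
    then show "prob ({w \<in> space M. U n w = k} \<inter> E k) = prob (E k) / (real n - 1)"
      using prob_U_eq[OF n, of k] k by auto
  qed
  finally show ?thesis
    by (simp add: sum_divide_distrib)
qed

lemma depth_ge_Suc_set:
  assumes "2 \<le> n"
  shows "{w \<in> space M. depth_ge (\<lambda>k. U k w) (Suc j) n} =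
    (\<Union>k\<in>{1..<n}. {w \<in> space M. U n w = k} \<inter> {w \<in> space M. depth_ge (\<lambda>k. U k w) j k})"
  using U_range[OF assms] assms by fastforce

lemma depth_ge_prim_sigma:
  "1 \<le> n \<Longrightarrow> IU ` {2..n} \<subseteq> S \<Longrightarrow> {w \<in> space M. depth_ge (\<lambda>k. U k w) j n} \<in> sets (prim_sigma S)"
proof (induction j arbitrary: n)
  case (Suc j)
  show ?case
  proof (cases "2 \<le> n")
    case True
    have "(\<Union>k\<in>{1..<n}. {w \<in> space M. U n w = k} \<inter> {w \<in> space M. depth_ge (\<lambda>k. U k w) j k})
        \<in> sets (prim_sigma S)"
      using Suc True by (intro sets.finite_UN ballI sets.Int U_eq_prim_sigma Suc.IH) auto
    then show ?thesis
      using depth_ge_Suc_set[OF True] by simp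
  qed simp
qed (use sets.top[of "prim_sigma S"] in simp)

text \<open>Each step to a uniform parent in {1..n-1} halves the expected label, so an ancestral
  line is unlikely to be long.\<close>
lemma prob_depth_ge: "1 \<le> n \<Longrightarrow> prob {w \<in> space M. depth_ge (\<lambda>k. U k w) j n} \<le> real n / 2 ^ j"
proof (induction j arbitrary: n)
  case (Suc j)
  show ?case
  proof (cases "2 \<le> n")
    case True
    let ?D = "\<lambda>k. {w \<in> space M. depth_ge (\<lambda>k. U k w) j k}"
    have "prob {w \<in> space M. depth_ge (\<lambda>k. U k w) (Suc j) n}
        = prob (\<Union>k\<in>{1..<n}. {w \<in> space M. U n w = k} \<inter> ?D k)"
      using depth_ge_Suc_set[OF True] by simp
    also have "\<dots> \<le> (\<Sum>k\<in>{1..<n}. prob (?D k)) / (real n - 1)"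
      by (rule prob_UN_U_eq_Int_le[OF True, where S="\<lambda>k. IU ` {2..k}"])
        (auto simp: valid_idx_def intro!: depth_ge_prim_sigma)
    also have "\<dots> \<le> (\<Sum>k\<in>{1..<n}. real k / 2 ^ j) / (real n - 1)"
      using True by (intro divide_right_mono sum_mono Suc.IH) auto
    also have "\<dots> = real n / 2 ^ Suc j"
      unfolding sum_divide_distrib[symmetric] sum_of_nat_atLeastLessThan_real
      using True by (simp add: field_simps)
    finally show ?thesis .
  qed simp
qed (simp add: prob_space)

definition incr_tail :: "real \<Rightarrow> real" where
  "incr_tail x = prob {w \<in> space M. x < nrm (Delta 1 w)}"

lemma incr_tail_nonneg [simp]: "0 \<le> incr_tail x"
  by (simp add: incr_tail_def)

lemma incr_tail_antimono: "x \<le> y \<Longrightarrow> incr_tail y \<le> incr_tail x"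
proof -
  assume "x \<le> y"
  moreover have "{w \<in> space M. x < nrm (Delta 1 w)} \<in> events"
    by measurable
  ultimately show ?thesis
    unfolding incr_tail_def by (intro finite_measure_mono) auto
qed

lemma prob_nrm_exceed_eq_incr_tail:
  assumes f: "f \<in> borel_measurable M" and distr: "distr M borel f = distr M borel (Delta 1)"
  shows "prob {w \<in> space M. x < nrm (f w)} = incr_tail x"
proof -
  have A: "{y. x < nrm y} \<in> sets borel"
    by measurable
  have "prob {w \<in> space M. x < nrm (f w)} = measure (distr M borel f) {y. x < nrm y}"
    using A f by (subst measure_distr) (auto simp: vimage_def Int_def conj_commute)
  also have "\<dots> = incr_tail x"
    using A unfolding distr incr_tail_def
    by (subst measure_distr) (auto simp: vimage_def Int_def conj_commute)
  finally show ?thesis .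
qed

lemma prob_Delta_exceed: "1 \<le> n \<Longrightarrow> prob {w \<in> space M. x < nrm (Delta n w)} = incr_tail x"
  by (intro prob_nrm_exceed_eq_incr_tail Delta_meas Delta_iid)

lemma prob_Dt_exceed: "1 \<le> n \<Longrightarrow> prob {w \<in> space M. x < nrm (Dt n w)} = incr_tail x"
  by (intro prob_nrm_exceed_eq_incr_tail Dt_meas Dt_dist)

lemma nrm_exceed_prim_sigma:
  assumes [measurable]: "f \<in> borel_measurable (prim_sigma S)"
  shows "{w \<in> space M. x < nrm (f w)} \<in> sets (prim_sigma S)"
    and "{w \<in> space M. nrm (f w) \<le> x} \<in> sets (prim_sigma S)"
proof -
  have "{w \<in> space (prim_sigma S). x < nrm (f w)} \<in> sets (prim_sigma S)"
    "{w \<in> space (prim_sigma S). nrm (f w) \<le> x} \<in> sets (prim_sigma S)"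
    by measurable
  then show "{w \<in> space M. x < nrm (f w)} \<in> sets (prim_sigma S)"
    "{w \<in> space M. nrm (f w) \<le> x} \<in> sets (prim_sigma S)"
    by simp_all
qed

definition prim_upto :: "nat \<Rightarrow> idx set" where
  "prim_upto n = IU ` {2..n} \<union> IDelta ` {1..n}"

lemma ancestral_line_hits_Suc_set:
  assumes "2 \<le> n"
  shows "{w \<in> space M. ancestral_line_hits (\<lambda>k. x < nrm (Delta k w)) (\<lambda>k. U k w) (Suc m) n} =
    {w \<in> space M. x < nrm (Delta n w)} \<union> (\<Union>k\<in>{1..<n}. {w \<in> space M. U n w = k} \<inter>
      {w \<in> space M. ancestral_line_hits (\<lambda>k. x < nrm (Delta k w)) (\<lambda>k. U k w) m k})"
  using U_range[OF assms] assms by fastforce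

lemma ancestral_line_hits_prim_sigma:
  "1 \<le> n \<Longrightarrow> prim_upto n \<subseteq> S \<Longrightarrow>
    {w \<in> space M. ancestral_line_hits (\<lambda>k. x < nrm (Delta k w)) (\<lambda>k. U k w) m n} \<in> sets (prim_sigma S)"
proof (induction m arbitrary: n)
  case 0
  then show ?case
    by (auto simp: prim_upto_def intro!: nrm_exceed_prim_sigma Delta_prim_sigma)
next
  case (Suc m)
  have Delta_n: "{w \<in> space M. x < nrm (Delta n w)} \<in> sets (prim_sigma S)"
    using Suc.prems by (auto simp: prim_upto_def intro!: nrm_exceed_prim_sigma Delta_prim_sigma)
  show ?case
  proof (cases "2 \<le> n")
    case True
    have "prim_upto k \<subseteq> S" if "k < n" for k
      using Suc.prems that unfolding prim_upto_def by auto
    then have "(\<Union>k\<in>{1..<n}. {w \<in> space M. U n w = k} \<inter>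
      {w \<in> space M. ancestral_line_hits (\<lambda>k. x < nrm (Delta k w)) (\<lambda>k. U k w) m k}) \<in> sets (prim_sigma S)"
      using Suc.prems True
      by (intro sets.finite_UN ballI sets.Int U_eq_prim_sigma Suc.IH) (auto simp: prim_upto_def)
    then show ?thesis
      using ancestral_line_hits_Suc_set[OF True] Delta_n by simp
  next
    case False
    then show ?thesis
      using Delta_n by simp
  qed
qed

lemma prob_ancestral_line_hits:
  "1 \<le> n \<Longrightarrow> prob {w \<in> space M. ancestral_line_hits (\<lambda>k. x < nrm (Delta k w)) (\<lambda>k. U k w) m n}
    \<le> (real m + 1) * incr_tail x"
proof (induction m arbitrary: n)
  case 0
  then show ?case
    by (simp add: prob_Delta_exceed)
next
  case (Suc m)
  show ?case
  proof (cases "2 \<le> n")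
    case False
    with Suc.prems have "n = 1"
      by simp
    then show ?thesis
      by (simp add: prob_Delta_exceed mult_le_cancel_right1 not_less)
  next
    case True
    let ?H = "\<lambda>k. {w \<in> space M. ancestral_line_hits (\<lambda>k. x < nrm (Delta k w)) (\<lambda>k. U k w) m k}"
    let ?A = "\<Union>k\<in>{1..<n}. {w \<in> space M. U n w = k} \<inter> ?H k"
    have H: "?H k \<in> sets (prim_sigma (prim_upto k))" if "1 \<le> k" for k
      using that by (intro ancestral_line_hits_prim_sigma) auto
    have "prob ?A \<le> (\<Sum>k\<in>{1..<n}. prob (?H k)) / (real n - 1)"
      by (rule prob_UN_U_eq_Int_le[OF True H]) (auto simp: prim_upto_def valid_idx_def)
    also have "\<dots> \<le> (\<Sum>k\<in>{1..<n}. (real m + 1) * incr_tail x) / (real n - 1)"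
      using True by (intro divide_right_mono sum_mono Suc.IH) auto
    also have "\<dots> = (real m + 1) * incr_tail x"
      using True by (simp add: of_nat_diff)
    finally have "prob ?A \<le> (real m + 1) * incr_tail x" .
    moreover have "?A \<in> events"
      using prim_sigma_events[OF H] prim_sigma_events[OF U_eq_prim_sigma[of n "{IU n}"]]
      by (intro sets.finite_UN sets.Int) auto
    then have "prob {w \<in> space M. ancestral_line_hits (\<lambda>k. x < nrm (Delta k w)) (\<lambda>k. U k w) (Suc m) n}
        \<le> prob {w \<in> space M. x < nrm (Delta n w)} + prob ?A"
      unfolding ancestral_line_hits_Suc_set[OF True] by (intro measure_Un_le) auto
    ultimately show ?thesis
      using prob_Delta_exceed[OF Suc.prems] by (simp add: algebra_simps)
  qed
qed

lemma prob_nrm_X_exceed: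
  assumes n: "1 \<le> n" and x: "0 \<le> x"
  shows "prob {w \<in> space M. (real m + 1) * x < nrm (X n w)} \<le> real n / 2 ^ Suc m + (real m + 1) * incr_tail x"
proof -
  let ?D = "{w \<in> space M. depth_ge (\<lambda>k. U k w) (Suc m) n}"
  let ?H = "{w \<in> space M. ancestral_line_hits (\<lambda>k. x < nrm (Delta k w)) (\<lambda>k. U k w) m n}"
  have D: "?D \<in> events"
    using prim_sigma_events[OF depth_ge_prim_sigma[OF n order.refl]] .
  have H: "?H \<in> events"
    using prim_sigma_events[OF ancestral_line_hits_prim_sigma[OF n order.refl]] .
  have "{w \<in> space M. (real m + 1) * x < nrm (X n w)} \<subseteq> ?D \<union> ?H"
    using nrm_X_le_if_shallow[OF _ n x] by fastforce
  then have "prob {w \<in> space M. (real m + 1) * x < nrm (X n w)} \<le> prob (?D \<union> ?H)"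
    by (rule finite_measure_mono) (intro sets.Un D H)
  also have "\<dots> \<le> prob ?D + prob ?H"
    using D H by (rule measure_Un_le)
  also have "\<dots> \<le> real n / 2 ^ Suc m + (real m + 1) * incr_tail x"
    using n by (intro add_mono prob_depth_ge prob_ancestral_line_hits)
  finally show ?thesis .
qed

section \<open>Polynomial tail of the increments\<close>

definition scaled_sums_converge :: bool where
  "scaled_sums_converge \<longleftrightarrow> (\<exists>\<alpha>>0. \<exists>L :: 'a measure. prob_space L \<and> sets L = sets borel \<and>
     (\<forall>f :: 'a \<Rightarrow> real. continuous_on UNIV f \<and> bounded (range f) \<longrightarrow>
       (\<lambda>n. \<integral>\<omega>. f ((real n powr (-\<alpha>)) *\<^sub>R (\<Sum>i=1..n. Delta i \<omega>)) \<partial>M) \<longlonglongrightarrow> (\<integral>x. f x \<partial>L)))"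

definition psum :: "nat \<Rightarrow> 'm \<Rightarrow> 'a" where
  "psum n w = (\<Sum>i=1..n. Delta i w)"

lemma psum_meas [measurable]: "psum n \<in> borel_measurable M"
  unfolding psum_def by measurable

lemma psum_split: "k \<le> n \<Longrightarrow> psum n w = psum k w + (\<Sum>i\<in>{k<..n}. Delta i w)"
proof -
  assume "k \<le> n"
  then have "{1..n} = {1..k} \<union> {k<..n}" "{1..k} \<inter> {k<..n} = {}"
    by auto
  then show ?thesis
    unfolding psum_def by (simp add: sum.union_disjoint)
qed

lemma prob_nrm_exceed_le_integral_ramp:
  assumes [measurable]: "Y \<in> borel_measurable M" and s: "0 < s"
  shows "prob {w \<in> space M. (K + 1) * s < nrm (Y w)} \<le> (\<integral>w. ramp K (inverse s *\<^sub>R Y w) \<partial>M)"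
proof -
  let ?A = "{w \<in> space M. (K + 1) * s < nrm (Y w)}"
  have "indicator ?A w \<le> ramp K (inverse s *\<^sub>R Y w)" for w
  proof (cases "w \<in> ?A")
    case True
    then have "K + 1 < inverse s * nrm (Y w)"
      using s by (simp add: field_simps)
    then have "ramp K (inverse s *\<^sub>R Y w) = 1"
      using s by (intro ramp_eq_1) (simp add: nrm_scale)
    then show ?thesis
      using True by simp
  qed (simp add: ramp_bounds)
  moreover have A: "?A \<in> events" and [measurable]: "(\<lambda>w. ramp K (inverse s *\<^sub>R Y w)) \<in> borel_measurable M"
    by measurable
  ultimately have "(\<integral>w. indicator ?A w \<partial>M) \<le> (\<integral>w. ramp K (inverse s *\<^sub>R Y w) \<partial>M)"
    using ramp_bounds by (intro integral_mono integrable_const_bound[where B=1]) auto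
  then show ?thesis
    using A by simp
qed

lemma partial_sums_tight_eventually:
  assumes conv: scaled_sums_converge
  shows "\<exists>\<alpha>>0. \<exists>K N. \<forall>n\<ge>N. prob {w \<in> space M. K * real n powr \<alpha> < nrm (psum n w)} \<le> 1/8"
proof -
  obtain \<alpha> L where \<alpha>: "\<alpha> > 0" and L: "prob_space L" "sets L = sets borel"
    and lim: "\<And>f :: 'a \<Rightarrow> real. continuous_on UNIV f \<Longrightarrow> bounded (range f) \<Longrightarrow>
          (\<lambda>n. \<integral>\<omega>. f ((real n powr (-\<alpha>)) *\<^sub>R psum n \<omega>) \<partial>M) \<longlonglongrightarrow> (\<integral>x. f x \<partial>L)"
    using conv unfolding scaled_sums_converge_def psum_def by blast
  obtain K where "(\<integral>y. ramp K y \<partial>L) < 1/8"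
    using ex_integral_ramp_less[OF L, of "1/8"] by auto
  then have "eventually (\<lambda>n. (\<integral>\<omega>. ramp K ((real n powr (-\<alpha>)) *\<^sub>R psum n \<omega>) \<partial>M) < 1/8) sequentially"
    by (rule order_tendstoD(2)[OF lim[OF continuous_on_ramp bounded_range_ramp]])
  then obtain N where N: "\<And>n. n \<ge> N \<Longrightarrow> (\<integral>\<omega>. ramp K ((real n powr (-\<alpha>)) *\<^sub>R psum n \<omega>) \<partial>M) < 1/8"
    by (auto simp: eventually_sequentially)
  have "prob {w \<in> space M. (K + 1) * real n powr \<alpha> < nrm (psum n w)} \<le> 1/8" if n: "n \<ge> max N 1" for n
  proof -
    have "prob {w \<in> space M. (K + 1) * real n powr \<alpha> < nrm (psum n w)}
        \<le> (\<integral>\<omega>. ramp K ((real n powr (-\<alpha>)) *\<^sub>R psum n \<omega>) \<partial>M)"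
      unfolding powr_minus using prob_nrm_exceed_le_integral_ramp[OF psum_meas, of "real n powr \<alpha>" K] n
      by simp
    also have "\<dots> \<le> 1/8"
      using N[of n] n by simp
    finally show ?thesis .
  qed
  then show ?thesis
    using \<alpha> by blast
qed

lemma ex_bound_psum_below:
  assumes "0 < e"
  shows "\<exists>m. \<forall>k<N. prob {w \<in> space M. real m < nrm (psum k w)} < e"
proof -
  have "eventually (\<lambda>m. prob {w \<in> space M. real m < nrm (psum k w)} < e) sequentially" for k
    using tendsto_measure_greater_nat[of "\<lambda>w. nrm (psum k w)"] assms by (intro order_tendstoD) auto
  then have "eventually (\<lambda>m. \<forall>k\<in>{..<N}. prob {w \<in> space M. real m < nrm (psum k w)} < e) sequentially"
    by (intro eventually_ball_finite) auto
  then show ?thesis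
    by (auto simp: eventually_sequentially)
qed

lemma partial_sums_tight:
  assumes \<alpha>: "\<alpha> > 0"
    and K: "\<And>n. n \<ge> N \<Longrightarrow> prob {w \<in> space M. K * real n powr \<alpha> < nrm (psum n w)} \<le> 1/8"
  shows "\<exists>K'>0. \<forall>n\<ge>1. \<forall>k\<le>n. prob {w \<in> space M. K' * real n powr \<alpha> < nrm (psum k w)} \<le> 1/8"
proof -
  obtain m where m: "\<And>k. k < N \<Longrightarrow> prob {w \<in> space M. real m < nrm (psum k w)} < 1/8"
    using ex_bound_psum_below[of "1/8" N] by auto
  define K' where "K' = max (max K (real m)) 1"
  have "prob {w \<in> space M. K' * real n powr \<alpha> < nrm (psum k w)} \<le> 1/8" if n: "n \<ge> 1" "k \<le> n" for n k
  proof (cases "k < N")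
    case True
    have "1 \<le> real n powr \<alpha>"
      using n \<alpha> by (intro ge_one_powr_ge_zero) auto
    then have "real m \<le> K' * real n powr \<alpha>"
      unfolding K'_def by (smt (verit, best) mult_le_cancel_left1)
    then have "prob {w \<in> space M. K' * real n powr \<alpha> < nrm (psum k w)} \<le> prob {w \<in> space M. real m < nrm (psum k w)}"
      by (intro finite_measure_mono) auto
    then show ?thesis
      using m[OF True] by simp
  next
    case False
    show ?thesis
    proof (cases "k = 0")
      case True
      have "0 \<le> K' * real n powr \<alpha>"
        by (simp add: K'_def)
      then show ?thesis
        using True by (simp add: psum_def)
    next
      case False
      have "K * real k powr \<alpha> \<le> K' * real k powr \<alpha>"
        unfolding K'_def by (intro mult_right_mono) auto
      also have "\<dots> \<le> K' * real n powr \<alpha>"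
        using n \<alpha> by (intro mult_left_mono powr_mono2) (auto simp: K'_def)
      finally have "prob {w \<in> space M. K' * real n powr \<alpha> < nrm (psum k w)}
          \<le> prob {w \<in> space M. K * real k powr \<alpha> < nrm (psum k w)}"
        by (intro finite_measure_mono) auto
      then show ?thesis
        using K[of k] \<open>\<not> k < N\<close> by simp
    qed
  qed
  moreover have "K' > 0"
    by (simp add: K'_def)
  ultimately show ?thesis
    by blast
qed

lemma sum_Delta_prim_sigma:
  "IDelta ` I \<subseteq> S \<Longrightarrow> (\<lambda>w. \<Sum>i\<in>I. Delta i w) \<in> borel_measurable (prim_sigma S)"
  by (intro borel_measurable_sum Delta_prim_sigma) auto

definition first_exceed :: "real \<Rightarrow> nat \<Rightarrow> 'm set" where
  "first_exceed s k = {w \<in> space M. s < nrm (psum k w) \<and> (\<forall>j\<in>{1..<k}. nrm (psum j w) \<le> s)}"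

lemma first_exceed_prim_sigma: "first_exceed s k \<in> sets (prim_sigma (IDelta ` {1..k}))"
proof -
  have psum: "psum j \<in> borel_measurable (prim_sigma (IDelta ` {1..k}))" if "j \<le> k" for j
    unfolding psum_def[abs_def] using that by (intro sum_Delta_prim_sigma) auto
  have "first_exceed s k = {w \<in> space M. s < nrm (psum k w)} - (\<Union>j\<in>{1..<k}. {w \<in> space M. s < nrm (psum j w)})"
    unfolding first_exceed_def by (auto simp: not_less)
  also have "\<dots> \<in> sets (prim_sigma (IDelta ` {1..k}))"
    using psum by (intro sets.Diff sets.finite_UN nrm_exceed_prim_sigma) auto
  finally show ?thesis .
qed

lemma first_exceed_disjoint:
  assumes "1 \<le> k" "k < j"
  shows "first_exceed s k \<inter> first_exceed s j = {}"
proof -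
  have "k \<in> {1..<j}"
    using assms by simp
  then show ?thesis
    unfolding first_exceed_def by (blast dest: leD)
qed

lemma disjoint_family_first_exceed: "disjoint_family_on (first_exceed s) {1..n}"
  unfolding disjoint_family_on_def
proof (intro ballI impI)
  fix k j assume "k \<in> {1..n}" "j \<in> {1..n}" "k \<noteq> j"
  then consider "1 \<le> k" "k < j" | "1 \<le> j" "j < k"
    by force
  then show "first_exceed s k \<inter> first_exceed s j = {}"
    by cases (use first_exceed_disjoint in blast)+
qed

lemma UN_first_exceed:
  "(\<Union>k\<in>{1..n}. first_exceed s k) = {w \<in> space M. \<exists>k\<in>{1..n}. s < nrm (psum k w)}"
proof
  show "{w \<in> space M. \<exists>k\<in>{1..n}. s < nrm (psum k w)} \<subseteq> (\<Union>k\<in>{1..n}. first_exceed s k)"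
  proof safe
    fix w k assume w: "w \<in> space M" and k: "k \<in> {1..n}" "s < nrm (psum k w)"
    have "\<exists>k0. (k0 \<in> {1..n} \<and> s < nrm (psum k0 w)) \<and> (\<forall>j<k0. \<not> (j \<in> {1..n} \<and> s < nrm (psum j w)))"
      using k by (subst exists_least_iff[symmetric]) blast
    then obtain k0 where k0: "k0 \<in> {1..n}" "s < nrm (psum k0 w)"
      and least: "\<And>j. j < k0 \<Longrightarrow> \<not> (j \<in> {1..n} \<and> s < nrm (psum j w))"
      by blast
    have "w \<in> first_exceed s k0"
      unfolding first_exceed_def using w k0 least by (auto simp: not_less)
    then show "w \<in> (\<Union>k\<in>{1..n}. first_exceed s k)"
      using k0 by blast
  qed
  show "(\<Union>k\<in>{1..n}. first_exceed s k) \<subseteq> {w \<in> space M. \<exists>k\<in>{1..n}. s < nrm (psum k w)}"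
    unfolding first_exceed_def by blast
qed

lemma prob_nrm_sum_Delta_le:
  assumes k: "k \<le> n" and small: "\<And>k. k \<le> n \<Longrightarrow> prob {w \<in> space M. t < nrm (psum k w)} \<le> 1/8"
  shows "3/4 \<le> prob {w \<in> space M. nrm (\<Sum>i\<in>{k<..n}. Delta i w) \<le> 2 * t}"
proof -
  let ?B = "{w \<in> space M. nrm (\<Sum>i\<in>{k<..n}. Delta i w) \<le> 2 * t}"
  have "space M - ?B \<subseteq> {w \<in> space M. t < nrm (psum n w)} \<union> {w \<in> space M. t < nrm (psum k w)}"
  proof
    fix w assume "w \<in> space M - ?B"
    moreover have "nrm (\<Sum>i\<in>{k<..n}. Delta i w) \<le> nrm (psum n w) + nrm (psum k w)"
      using psum_split[OF k, of w] nrm_diff_le[of "psum n w" "psum k w"] by simp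
    ultimately show "w \<in> {w \<in> space M. t < nrm (psum n w)} \<union> {w \<in> space M. t < nrm (psum k w)}"
      by auto
  qed
  then have "prob (space M - ?B) \<le> prob {w \<in> space M. t < nrm (psum n w)} + prob {w \<in> space M. t < nrm (psum k w)}"
    by (intro order.trans[OF finite_measure_mono measure_Un_le]) measurable
  also have "\<dots> \<le> 1/4"
    using small[of n] small[OF k] by simp
  finally show ?thesis
    by (subst (asm) prob_compl) measurable
qed

text \<open>Ottaviani's maximal inequality. If the partial sums first exceed 3t at k and the
  (independent) remaining increments sum to at most 2t, then S_n exceeds t.\<close>
lemma ottaviani:
  assumes small: "\<And>k. k \<le> n \<Longrightarrow> prob {w \<in> space M. t < nrm (psum k w)} \<le> 1/8"
  shows "prob {w \<in> space M. \<exists>k\<in>{1..n}. 3 * t < nrm (psum k w)} \<le> 1/6"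
proof -
  let ?A = "first_exceed (3 * t)"
  define B where "B k = {w \<in> space M. nrm (\<Sum>i\<in>{k<..n}. Delta i w) \<le> 2 * t}" for k
  have A: "?A k \<in> events" for k
    using first_exceed_prim_sigma by (rule prim_sigma_events)
  have B_sets: "B k \<in> sets (prim_sigma (IDelta ` {k<..n}))" for k
    unfolding B_def by (intro nrm_exceed_prim_sigma sum_Delta_prim_sigma) auto
  then have B: "B k \<in> events" for k
    by (rule prim_sigma_events)
  have AB: "?A k \<inter> B k \<subseteq> {w \<in> space M. t < nrm (psum n w)}" if "k \<le> n" for k
  proof safe
    fix w assume "w \<in> ?A k" "w \<in> B k"
    moreover have "nrm (psum k w) \<le> nrm (psum n w) + nrm (\<Sum>i\<in>{k<..n}. Delta i w)"
      using psum_split[OF that, of w] nrm_diff_le[of "psum n w" "\<Sum>i\<in>{k<..n}. Delta i w"] by simp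
    ultimately show "t < nrm (psum n w)"
      by (auto simp: first_exceed_def B_def)
  qed (simp add: B_def)
  have prob_B: "3/4 \<le> prob (B k)" if "k \<le> n" for k
    unfolding B_def using that small by (rule prob_nrm_sum_Delta_le)
  have "(\<Sum>k\<in>{1..n}. prob (?A k)) * (3/4) \<le> (\<Sum>k\<in>{1..n}. prob (?A k \<inter> B k))"
  proof (unfold sum_distrib_right, rule sum_mono)
    fix k assume k: "k \<in> {1..n}"
    have "prob (?A k \<inter> B k) = prob (?A k) * prob (B k)"
      by (rule prob_Int_prim_sigma[OF _ _ _ first_exceed_prim_sigma B_sets]) (auto simp: valid_idx_def)
    moreover have "prob (?A k) * (3/4) \<le> prob (?A k) * prob (B k)"
      using prob_B[of k] k by (intro mult_left_mono) auto
    ultimately show "prob (?A k) * (3/4) \<le> prob (?A k \<inter> B k)"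
      by simp
  qed
  also have "\<dots> = prob (\<Union>k\<in>{1..n}. ?A k \<inter> B k)"
  proof (intro finite_measure_finite_Union[symmetric])
    show "disjoint_family_on (\<lambda>k. ?A k \<inter> B k) {1..n}"
      by (rule disjoint_family_on_bisimulation[OF disjoint_family_first_exceed]) blast
  qed (use A B in auto)
  also have "\<dots> \<le> prob {w \<in> space M. t < nrm (psum n w)}"
  proof (rule finite_measure_mono)
    show "(\<Union>k\<in>{1..n}. ?A k \<inter> B k) \<subseteq> {w \<in> space M. t < nrm (psum n w)}"
      using AB by (intro UN_least) auto
  qed measurable
  also have "\<dots> \<le> 1/8"
    by (rule small) simp
  finally have "(\<Sum>k\<in>{1..n}. prob (?A k)) \<le> 1/6"
    by simp
  moreover have "prob (\<Union>k\<in>{1..n}. ?A k) = (\<Sum>k\<in>{1..n}. prob (?A k))"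
    using A disjoint_family_first_exceed by (intro finite_measure_finite_Union) auto
  ultimately show ?thesis
    unfolding UN_first_exceed by simp
qed

lemma prob_all_Delta_le: "prob {w \<in> space M. \<forall>k\<in>{1..n}. nrm (Delta k w) \<le> s} = (1 - incr_tail s) ^ n"
proof (cases "n = 0")
  case False
  define E where "E i = (case i of IDelta k \<Rightarrow> {w \<in> space M. nrm (Delta k w) \<le> s} | _ \<Rightarrow> {})" for i
  have E: "E (IDelta k) \<in> prim_events (IDelta k)" for k
  proof -
    have "Delta k -` {y. nrm y \<le> s} \<inter> space M \<in> prim_events (IDelta k)"
      unfolding prim_events_def idx.case by (rule events_ofI) measurable
    moreover have "Delta k -` {y. nrm y \<le> s} \<inter> space M = E (IDelta k)"
      by (auto simp: E_def)
    ultimately show ?thesis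
      by simp
  qed
  have "prob (\<Inter>i\<in>IDelta ` {1..n}. E i) = (\<Prod>i\<in>IDelta ` {1..n}. prob (E i))"
    using False E by (intro indep_setsD[OF indep[folded prim_events_def[abs_def]]]) (auto simp: valid_idx_def)
  also have "(\<Inter>i\<in>IDelta ` {1..n}. E i) = (\<Inter>k\<in>{1..n}. {w \<in> space M. nrm (Delta k w) \<le> s})"
    by (simp add: E_def)
  also have "\<dots> = {w \<in> space M. \<forall>k\<in>{1..n}. nrm (Delta k w) \<le> s}"
    using False by force
  also have "(\<Prod>i\<in>IDelta ` {1..n}. prob (E i)) = (\<Prod>k\<in>{1..n}. prob (E (IDelta k)))"
    by (simp add: prod.reindex inj_on_def)
  also have "\<dots> = (\<Prod>k\<in>{1..n}. 1 - incr_tail s)"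
  proof (rule prod.cong[OF refl])
    fix k assume k: "k \<in> {1..n}"
    have "E (IDelta k) = space M - {w \<in> space M. s < nrm (Delta k w)}"
      by (auto simp: E_def)
    then show "prob (E (IDelta k)) = 1 - incr_tail s"
      using k by (simp add: prob_compl prob_Delta_exceed)
  qed
  finally show ?thesis
    by simp
qed (simp add: prob_space)

lemma psum_exceed_if_Delta_exceed:
  assumes t: "0 < t" and k: "k \<in> {1..n}" and big: "6 * t < nrm (Delta k w)"
  shows "\<exists>j\<in>{1..n}. 3 * t < nrm (psum j w)"
proof -
  have "{k - 1<..k} = {k}"
    using k by auto
  then have "psum k w = psum (k - 1) w + Delta k w"
    using psum_split[of "k - 1" k w] by simp
  then have "nrm (Delta k w) \<le> nrm (psum k w) + nrm (psum (k - 1) w)"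
    using nrm_diff_le[of "psum k w" "psum (k - 1) w"] by (simp add: algebra_simps)
  then consider "3 * t < nrm (psum k w)" | "3 * t < nrm (psum (k - 1) w)"
    using big by linarith
  then show ?thesis
  proof cases
    case 2
    then have "k - 1 \<in> {1..n}"
      using k t by (cases "k = 1") (auto simp: psum_def)
    with 2 show ?thesis
      by blast
  qed (use k in blast)
qed

text \<open>No increment up to n exceeds 6t with probability (1 - p)^n \<ge> 5/6, where p is the
  tail at 6t; this forces n p \<le> 1/5.\<close>
lemma n_mult_incr_tail_le:
  assumes t: "t > 0" and small: "\<And>k. k \<le> n \<Longrightarrow> prob {w \<in> space M. t < nrm (psum k w)} \<le> 1/8"
  shows "real n * incr_tail (6 * t) \<le> 1/5"
proof -
  let ?big = "{w \<in> space M. \<exists>k\<in>{1..n}. 6 * t < nrm (Delta k w)}"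
  have "?big \<subseteq> {w \<in> space M. \<exists>k\<in>{1..n}. 3 * t < nrm (psum k w)}"
    using psum_exceed_if_Delta_exceed[OF t] by blast
  then have "prob ?big \<le> prob {w \<in> space M. \<exists>k\<in>{1..n}. 3 * t < nrm (psum k w)}"
    by (rule finite_measure_mono) measurable
  also have "\<dots> \<le> 1/6"
    using small by (rule ottaviani)
  finally have "5/6 \<le> 1 - prob ?big"
    by simp
  also have "1 - prob ?big = prob (space M - ?big)"
    by (subst prob_compl) measurable
  also have "space M - ?big = {w \<in> space M. \<forall>k\<in>{1..n}. nrm (Delta k w) \<le> 6 * t}"
    by (auto simp: not_less)
  also have "prob \<dots> = (1 - incr_tail (6 * t)) ^ n"
    by (rule prob_all_Delta_le)
  finally have "5/6 * (1 + real n * incr_tail (6 * t)) \<le> (1 - incr_tail (6 * t)) ^ n * (1 + real n * incr_tail (6 * t))"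
    by (intro mult_right_mono) auto
  also have "\<dots> \<le> 1"
    by (rule one_minus_power_mult_le_one) (auto simp: incr_tail_def)
  finally show ?thesis
    by simp
qed

lemma incr_tail_at_powers:
  assumes conv: scaled_sums_converge
  shows "\<exists>\<alpha> c. 0 < \<alpha> \<and> 0 < c \<and> (\<forall>n\<ge>1. incr_tail (c * real n powr \<alpha>) \<le> 1 / real n)"
proof -
  obtain \<alpha> K N where \<alpha>: "\<alpha> > 0"
    and tight: "\<And>n. n \<ge> N \<Longrightarrow> prob {w \<in> space M. K * real n powr \<alpha> < nrm (psum n w)} \<le> 1/8"
    using partial_sums_tight_eventually[OF conv] by blast
  obtain K' where K': "K' > 0"
    and small: "\<And>n k. n \<ge> 1 \<Longrightarrow> k \<le> n \<Longrightarrow> prob {w \<in> space M. K' * real n powr \<alpha> < nrm (psum k w)} \<le> 1/8"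
    using partial_sums_tight[OF \<alpha> tight] by blast
  have "incr_tail (6 * K' * real n powr \<alpha>) \<le> 1 / real n" if n: "n \<ge> 1" for n
  proof -
    have "real n * incr_tail (6 * (K' * real n powr \<alpha>)) \<le> 1/5"
      using K' n by (intro n_mult_incr_tail_le small) auto
    then show ?thesis
      using n by (simp add: mult.assoc field_simps)
  qed
  then show ?thesis
    using \<alpha> K' by (intro exI[of _ \<alpha>] exI[of _ "6 * K'"]) auto
qed

lemma incr_tail_powr_bound:
  assumes conv: scaled_sums_converge
  shows "\<exists>C \<beta> x\<^sub>0. 0 < C \<and> 0 < \<beta> \<and> (\<forall>x\<ge>x\<^sub>0. incr_tail x \<le> C * x powr (-\<beta>))"
proof -
  obtain \<alpha> c where \<alpha>: "0 < \<alpha>" and c: "0 < c"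
    and tail: "\<And>n. n \<ge> 1 \<Longrightarrow> incr_tail (c * real n powr \<alpha>) \<le> 1 / real n"
    using incr_tail_at_powers[OF conv] by blast
  have "\<forall>x\<ge>c. incr_tail x \<le> 2 * c powr (1 / \<alpha>) * x powr (- (1 / \<alpha>))"
    using incr_tail_antimono \<alpha> c tail by (rule antimono_powr_tail_interpolate)
  moreover have "0 < 2 * c powr (1 / \<alpha>)" "0 < 1 / \<alpha>"
    using \<alpha> c by auto
  ultimately show ?thesis
    by blast
qed

section \<open>Conditioning on the walk\<close>

definition sigma_X :: "'m measure" where
  "sigma_X = sigma (space M)
     ({X i -` A \<inter> space M | i A. 1 \<le> i \<and> A \<in> sets borel} \<union>
      {U i -` A \<inter> space M | i A. 2 \<le> i \<and> A \<in> sets (count_space UNIV)})"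

lemma
  shows space_sigma_X [simp]: "space sigma_X = space M"
    and sets_sigma_X: "sets sigma_X = sigma_sets (space M)
     ({X i -` A \<inter> space M | i A. 1 \<le> i \<and> A \<in> sets borel} \<union>
      {U i -` A \<inter> space M | i A. 2 \<le> i \<and> A \<in> sets (count_space UNIV)})"
proof -
  have gen: "{X i -` A \<inter> space M | i A. 1 \<le> i \<and> A \<in> sets borel} \<union>
      {U i -` A \<inter> space M | i A. 2 \<le> i \<and> A \<in> sets (count_space UNIV)} \<subseteq> Pow (space M)"
    by blast
  show "space sigma_X = space M"
    unfolding sigma_X_def using gen by (rule space_measure_of)
  show "sets sigma_X = sigma_sets (space M)
     ({X i -` A \<inter> space M | i A. 1 \<le> i \<and> A \<in> sets borel} \<union>
      {U i -` A \<inter> space M | i A. 2 \<le> i \<and> A \<in> sets (count_space UNIV)})"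
    unfolding sigma_X_def using gen by (rule sets_measure_of)
qed

lemma sets_sigma_X_subset: "sets sigma_X \<subseteq> sets (prim_sigma walk_idx)"
  unfolding sets_sigma_X
proof (intro sets.sigma_sets_subset[of _ "prim_sigma walk_idx", simplified] subsetI, safe)
  fix i :: nat and A :: "'a set" assume "1 \<le> i" "A \<in> sets borel"
  then show "X i -` A \<inter> space M \<in> sets (prim_sigma walk_idx)"
    using measurable_sets[OF X_prim_sigma_walk_idx] by (metis space_prim_sigma)
next
  fix i :: nat and A :: "nat set" assume "2 \<le> i"
  then show "U i -` A \<inter> space M \<in> sets (prim_sigma walk_idx)"
    using measurable_sets[OF U_prim_sigma, of i walk_idx A] by (simp add: walk_idx_def)
qed

lemma sigma_X_events: "A \<in> sets sigma_X \<Longrightarrow> A \<in> events"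
  using sets_sigma_X_subset sets_prim_sigma_subset by blast

lemma subalgebra_sigma_X: "subalgebra M sigma_X"
  unfolding subalgebra_def using sigma_X_events by auto

lemma sigma_finite_subalgebra_sigma_X: "sigma_finite_subalgebra M sigma_X"
proof -
  have "finite_measure_subalgebra M sigma_X"
    unfolding finite_measure_subalgebra_def finite_measure_subalgebra_axioms_def
    using subalgebra_sigma_X finite_measure_axioms by auto
  then show ?thesis
    by (rule finite_measure_subalgebra_is_sigma_finite)
qed

lemma nrm_X_exceed_sigma_X: "1 \<le> i \<Longrightarrow> {w \<in> space M. c < nrm (X i w)} \<in> sets sigma_X"
proof -
  assume "1 \<le> i"
  then have [measurable]: "X i \<in> borel_measurable sigma_X"
    by (intro measurableI) (auto simp: sets_sigma_X simp del: One_nat_def intro!: sigma_sets.Basic)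
  have "{w \<in> space sigma_X. c < nrm (X i w)} \<in> sets sigma_X"
    by measurable
  then show ?thesis
    by simp
qed

definition frac_exceed :: "real \<Rightarrow> nat \<Rightarrow> 'm \<Rightarrow> real" where
  "frac_exceed c N w = (\<Sum>i\<in>{1..N}. indicator {w \<in> space M. c < nrm (X i w)} w) / real N"

lemma frac_exceed_bounds: "0 \<le> frac_exceed c N w" "frac_exceed c N w \<le> 1"
proof -
  show "0 \<le> frac_exceed c N w"
    unfolding frac_exceed_def by (intro divide_nonneg_nonneg sum_nonneg) auto
  have "(\<Sum>i\<in>{1..N}. indicator {w \<in> space M. c < nrm (X i w)} w) \<le> (\<Sum>i\<in>{1..N}. 1 :: real)"
    by (intro sum_mono) (auto simp: indicator_def)
  then show "frac_exceed c N w \<le> 1"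
    unfolding frac_exceed_def by (cases "N = 0") auto
qed

lemma frac_exceed_sigma_X: "frac_exceed c N \<in> borel_measurable sigma_X"
  unfolding frac_exceed_def
  by (intro borel_measurable_divide borel_measurable_sum borel_measurable_indicator
      nrm_X_exceed_sigma_X borel_measurable_const) auto

lemma integrable_frac_exceed: "integrable M (frac_exceed c N)"
proof (rule integrable_const_bound[where B=1])
  show "frac_exceed c N \<in> borel_measurable M"
    using measurable_from_subalg[OF subalgebra_sigma_X frac_exceed_sigma_X] .
qed (use frac_exceed_bounds in auto)

definition picked_exceed :: "real \<Rightarrow> nat \<Rightarrow> 'm set" where
  "picked_exceed c N = (\<Union>k\<in>{1..N}. {w \<in> space M. UU N w = k} \<inter> {w \<in> space M. c < nrm (X k w)})"

lemma UU_eq_prim_sigma: "{w \<in> space M. UU N w = k} \<in> sets (prim_sigma {IUU N})"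
  using measurable_sets[OF UU_prim_sigma, of N "{IUU N}" "{k}"] by (simp add: vimage_def Int_def conj_commute)

lemma prob_UU_eq:
  assumes "k \<in> {1..N}"
  shows "prob {w \<in> space M. UU N w = k} = 1 / real N"
proof -
  have "prob {w \<in> space M. UU N w = k} = measure (distr M (count_space UNIV) (UU N)) {k}"
    by (subst measure_distr) (auto simp: vimage_def Int_def conj_commute)
  also have "\<dots> = 1 / real N"
    using UU_dist[of N] assms by (simp add: measure_pmf_single)
  finally show ?thesis .
qed

lemma picked_exceed_events: "picked_exceed c N \<in> events"
  unfolding picked_exceed_def
  using prim_sigma_events[OF UU_eq_prim_sigma] sigma_X_events[OF nrm_X_exceed_sigma_X]
  by (intro sets.finite_UN sets.Int) auto

text \<open>Since UU N is uniform on {1..N} and independent of the walk, picking the vertex UU N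
  averages over the first N vertices.\<close>
lemma set_integral_picked_exceed:
  assumes N: "1 \<le> N" and A: "A \<in> sets sigma_X"
  shows "(\<integral>x\<in>A. indicator (picked_exceed c N) x \<partial>M) = (\<integral>x\<in>A. frac_exceed c N x \<partial>M)"
proof -
  let ?B = "\<lambda>k. A \<inter> {w \<in> space M. c < nrm (X k w)}"
  let ?V = "\<lambda>k. {w \<in> space M. UU N w = k}"
  have B: "?B k \<in> sets sigma_X" if "k \<in> {1..N}" for k
    using A nrm_X_exceed_sigma_X that by auto
  have "(\<integral>x\<in>A. indicator (picked_exceed c N) x \<partial>M) = prob (A \<inter> picked_exceed c N)"
    using A by (intro set_integral_indicator_eq_measure sigma_X_events picked_exceed_events)
  also have "A \<inter> picked_exceed c N = (\<Union>k\<in>{1..N}. ?V k \<inter> ?B k)"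
    unfolding picked_exceed_def by auto
  also have "prob \<dots> = (\<Sum>k\<in>{1..N}. prob (?V k \<inter> ?B k))"
  proof (intro finite_measure_finite_Union)
    show "(\<lambda>k. ?V k \<inter> ?B k) ` {1..N} \<subseteq> events"
      using prim_sigma_events[OF UU_eq_prim_sigma] sigma_X_events[OF B] by blast
  qed (auto simp: disjoint_family_on_def)
  also have "\<dots> = (\<Sum>k\<in>{1..N}. prob (?B k) / real N)"
  proof (rule sum.cong[OF refl])
    fix k assume k: "k \<in> {1..N}"
    have "prob (?V k \<inter> ?B k) = prob (?V k) * prob (?B k)"
      using N B[OF k] sets_sigma_X_subset walk_idx_valid
      by (intro prob_Int_prim_sigma[of "{IUU N}" walk_idx, OF _ _ _ UU_eq_prim_sigma])
        (auto simp: valid_idx_def walk_idx_def)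
    then show "prob (?V k \<inter> ?B k) = prob (?B k) / real N"
      using prob_UU_eq[OF k] by simp
  qed
  also have "\<dots> = (\<integral>x\<in>A. frac_exceed c N x \<partial>M)"
  proof -
    have B_ev: "?B k \<in> events" if "k \<in> {1..N}" for k
      using B[OF that] by (rule sigma_X_events)
    have "(\<integral>x\<in>A. frac_exceed c N x \<partial>M) = (\<integral>x. (\<Sum>k\<in>{1..N}. indicator (?B k) x) / real N \<partial>M)"
      unfolding set_lebesgue_integral_def frac_exceed_def
      by (intro Bochner_Integration.integral_cong) (auto simp: indicator_def sum_divide_distrib[symmetric])
    also have "\<dots> = (\<Sum>k\<in>{1..N}. prob (?B k) / real N)"
      using B_ev by (simp add: Bochner_Integration.integral_sum sum_divide_distrib less_top[symmetric])
    finally show ?thesis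
      by (rule sym)
  qed
  finally show ?thesis .
qed

lemma real_cond_exp_picked_exceed:
  assumes "1 \<le> N"
  shows "AE w in M. real_cond_exp M sigma_X (indicator (picked_exceed c N)) w = frac_exceed c N w"
proof -
  interpret F: sigma_finite_subalgebra M sigma_X
    by (rule sigma_finite_subalgebra_sigma_X)
  show ?thesis
    using assms picked_exceed_events
    by (intro F.real_cond_exp_charact set_integral_picked_exceed frac_exceed_sigma_X
        integrable_frac_exceed) (auto simp: less_top[symmetric])
qed

lemma real_cond_exp_Dt_exceed:
  assumes n: "1 \<le> n"
  shows "AE w in M. real_cond_exp M sigma_X (indicator {w \<in> space M. s < nrm (Dt n w)}) w = incr_tail s"
proof -
  interpret F: sigma_finite_subalgebra M sigma_X
    by (rule sigma_finite_subalgebra_sigma_X)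
  let ?D = "{w \<in> space M. s < nrm (Dt n w)}"
  have D: "?D \<in> sets (prim_sigma {IDt n})"
    by (intro nrm_exceed_prim_sigma Dt_prim_sigma) simp
  have "(\<integral>x\<in>A. indicator ?D x \<partial>M) = (\<integral>x\<in>A. incr_tail s \<partial>M)" if A: "A \<in> sets sigma_X" for A
  proof -
    have "(\<integral>x\<in>A. indicator ?D x \<partial>M) = prob (A \<inter> ?D)"
      using sigma_X_events[OF A] prim_sigma_events[OF D] by (rule set_integral_indicator_eq_measure)
    also have "\<dots> = prob A * prob ?D"
      using A sets_sigma_X_subset n walk_idx_valid
      by (intro prob_Int_prim_sigma[of walk_idx "{IDt n}", OF _ _ _ _ D])
        (auto simp: valid_idx_def walk_idx_def)
    also have "\<dots> = (\<integral>x\<in>A. incr_tail s \<partial>M)"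
    proof -
      have "(\<integral>x\<in>A. incr_tail s \<partial>M) = (\<integral>x. indicator A x \<partial>M) * incr_tail s"
        unfolding set_lebesgue_integral_def by simp
      then show ?thesis
        using sigma_X_events[OF A] n by (simp add: prob_Dt_exceed)
    qed
    finally show ?thesis .
  qed
  then show ?thesis
    using prim_sigma_events[OF D] by (intro F.real_cond_exp_charact) (auto simp: less_top[symmetric])
qed

lemma AE_UU_range: "1 \<le> N \<Longrightarrow> AE w in M. UU N w \<in> {1..N}"
proof -
  assume N: "1 \<le> N"
  let ?out = "{w \<in> space M. UU N w \<notin> {1..N}}"
  have "UU N -` {1..N} \<inter> space M \<in> events"
    by (rule measurable_sets[OF UU_meas]) simp
  moreover have "?out = space M - (UU N -` {1..N} \<inter> space M)"
    by auto
  ultimately have out: "?out \<in> events"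
    by simp
  have "prob ?out = measure (distr M (count_space UNIV) (UU N)) (- {1..N})"
    by (subst measure_distr[OF UU_meas]) (auto simp: vimage_def Int_def conj_commute)
  also have "\<dots> = measure (measure_pmf (pmf_of_set {1..N})) (- {1..N})"
    using UU_dist[OF N] by simp
  also have "\<dots> = 0"
    using N by (subst measure_pmf_zero_iff) auto
  finally show ?thesis
    using out by (subst AE_iff_measurable[OF out refl]) (simp add: emeasure_eq_measure)
qed

text \<open>The event need not be measurable: UU N may leave {1..N} on a null set, where
  X (UU N w) is unconstrained.\<close>
lemma cond_prob_nrm_X_UU_le:
  fixes c :: real
  assumes N: "1 \<le> N"
  defines "E \<equiv> {w \<in> space M. c < nrm (X (UU N w) w)}"
  shows "AE w in M. 0 \<le> real_cond_exp M sigma_X (indicator E) w \<and>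
    real_cond_exp M sigma_X (indicator E) w \<le> frac_exceed c N w"
proof (rule real_cond_exp_indicator_bound[OF sigma_finite_subalgebra_sigma_X _ picked_exceed_events])
  show "AE w in M. w \<in> E \<longrightarrow> w \<in> picked_exceed c N"
    using AE_UU_range[OF N] by eventually_elim (auto simp: E_def picked_exceed_def)
  show "AE w in M. real_cond_exp M sigma_X (indicator (picked_exceed c N)) w \<le> frac_exceed c N w"
    using real_cond_exp_picked_exceed[OF N, of c] by eventually_elim simp
qed (auto simp: E_def frac_exceed_bounds)

lemma cond_prob_nrm_X_UU_plus_le:
  fixes c :: real
  assumes N: "1 \<le> N" and n: "1 \<le> n"
  defines "E \<equiv> {w \<in> space M. c < nrm (X (UU N w) w + (if R n w then Dt n w else 0))}"
  shows "AE w in M. 0 \<le> real_cond_exp M sigma_X (indicator E) w \<and>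
    real_cond_exp M sigma_X (indicator E) w \<le> frac_exceed (c/2) N w + incr_tail (c/2)"
proof -
  let ?P = "picked_exceed (c/2) N" and ?D = "{w \<in> space M. c/2 < nrm (Dt n w)}"
  have P: "?P \<in> events" and D: "?D \<in> events"
    by (rule picked_exceed_events) measurable
  have "AE w in M. w \<in> E \<longrightarrow> w \<in> ?P \<union> ?D"
    using AE_UU_range[OF N]
  proof eventually_elim
    case (elim w)
    show ?case
    proof
      assume "w \<in> E"
      then have w: "w \<in> space M" and "c < nrm (X (UU N w) w + (if R n w then Dt n w else 0))"
        by (auto simp: E_def)
      moreover have "nrm (if R n w then Dt n w else 0) \<le> nrm (Dt n w)"
        using nrm_nonneg by auto
      ultimately have "c < nrm (X (UU N w) w) + nrm (Dt n w)"
        using nrm_triangle[of "X (UU N w) w" "if R n w then Dt n w else 0"] by linarith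
      then consider "c/2 < nrm (X (UU N w) w)" | "c/2 < nrm (Dt n w)"
        by linarith
      then show "w \<in> ?P \<union> ?D"
        by cases (use w elim in \<open>auto simp: picked_exceed_def\<close>)
    qed
  qed
  moreover have "AE w in M. real_cond_exp M sigma_X (indicator (?P \<union> ?D)) w
      \<le> frac_exceed (c/2) N w + incr_tail (c/2)"
    using real_cond_exp_indicator_Un_le[OF sigma_finite_subalgebra_sigma_X P D]
      real_cond_exp_picked_exceed[OF N, of "c/2"] real_cond_exp_Dt_exceed[OF n, of "c/2"]
    by eventually_elim simp
  ultimately show ?thesis
    using P D frac_exceed_bounds
    by (intro real_cond_exp_indicator_bound[OF sigma_finite_subalgebra_sigma_X])
      (auto simp: E_def intro: add_nonneg_nonneg)
qed

lemma expectation_frac_exceed_le: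
  assumes N: "1 \<le> N" and c: "0 \<le> c"
  shows "expectation (frac_exceed c N) \<le> real N / 2 ^ Suc m + (real m + 1) * incr_tail (c / (real m + 1))"
proof -
  let ?B = "\<lambda>i. {w \<in> space M. c < nrm (X i w)}"
  let ?b = "real N / 2 ^ Suc m + (real m + 1) * incr_tail (c / (real m + 1))"
  have B: "?B i \<in> events" if "i \<in> {1..N}" for i
    using that by (intro sigma_X_events nrm_X_exceed_sigma_X) simp
  have "expectation (frac_exceed c N) = (\<Sum>i\<in>{1..N}. prob (?B i)) / real N"
    unfolding frac_exceed_def using B
    by (simp add: Bochner_Integration.integral_sum less_top[symmetric])
  also have "\<dots> \<le> (\<Sum>i\<in>{1..N}. ?b) / real N"
  proof (intro divide_right_mono sum_mono)
    fix i assume i: "i \<in> {1..N}"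
    have "prob (?B i) \<le> real i / 2 ^ Suc m + (real m + 1) * incr_tail (c / (real m + 1))"
      using prob_nrm_X_exceed[of i "c / (real m + 1)" m] i c by simp
    also have "\<dots> \<le> ?b"
      using i by (intro add_right_mono divide_right_mono) auto
    finally show "prob (?B i) \<le> ?b" .
  qed simp
  also have "\<dots> = ?b"
    using N by simp
  finally show ?thesis .
qed

lemma eventually_expectation_frac_exceed_le:
  assumes tail: "\<And>x. x \<ge> x\<^sub>0 \<Longrightarrow> incr_tail x \<le> C * x powr (-\<beta>)"
    and C: "C \<ge> 0" and \<beta>: "\<beta> > 0" and \<gamma>: "\<gamma> \<ge> 2" "\<gamma> * \<beta> \<ge> 6 + \<beta>"
  shows "eventually (\<lambda>n. \<forall>m\<le>n+1. \<forall>c\<ge>real n powr \<gamma> / 2.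
           expectation (frac_exceed c (T m)) \<le> real n powr (-3)) sequentially"
proof -
  have "eventually (\<lambda>n. (real n + 1) * incr_tail (real n powr \<gamma> / (2 * (real n + 1)))
      \<le> real n powr (-3) / 2) sequentially"
    by (rule eventually_powr_tail_small[OF _ C \<beta> \<gamma>]) (fact tail)
  then show ?thesis
    using eventually_T_le_power_two
  proof eventually_elim
  case (elim n)
  show ?case
  proof (intro allI impI)
    fix m and c :: real assume m: "m \<le> n + 1" and c: "real n powr \<gamma> / 2 \<le> c"
    have "real n powr \<gamma> / (2 * (real n + 1)) = (real n powr \<gamma> / 2) / (real n + 1)"
      by simp
    also have "\<dots> \<le> c / (real n + 1)"
      using c by (intro divide_right_mono) auto
    finally have "(real n + 1) * incr_tail (c / (real n + 1))
        \<le> (real n + 1) * incr_tail (real n powr \<gamma> / (2 * (real n + 1)))"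
      by (intro mult_left_mono incr_tail_antimono) auto
    moreover have "0 \<le> c"
      using c powr_ge_zero[of "real n" \<gamma>] by linarith
    then have "expectation (frac_exceed c (T m))
        \<le> real (T m) / 2 ^ Suc n + (real n + 1) * incr_tail (c / (real n + 1))"
      by (intro expectation_frac_exceed_le T_ge_1)
    moreover have "real (T m) / 2 ^ Suc n \<le> real n powr (-3) / 2"
      using elim(2) m by blast
    ultimately show "expectation (frac_exceed c (T m)) \<le> real n powr (-3)"
      using elim(1) by linarith
  qed
  qed
qed

lemma AE_cond_prob_nrm_X_UU_smallo:
  assumes tail: "\<And>x. x \<ge> x\<^sub>0 \<Longrightarrow> incr_tail x \<le> C * x powr (-\<beta>)"
    and C: "C \<ge> 0" and \<beta>: "\<beta> > 0" and \<gamma>: "\<gamma> \<ge> 2" "\<gamma> * \<beta> \<ge> 6 + \<beta>"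
  shows "AE \<omega> in M. (\<lambda>n. real_cond_exp M sigma_X
          (indicator {\<omega>'\<in>space M. nrm (X (UU (T (n+1)) \<omega>') \<omega>') > real n powr \<gamma>}) \<omega>)
         \<in> o(\<lambda>n. real n powr (-4/3))"
    (is "AE \<omega> in M. (\<lambda>n. ?r n \<omega>) \<in> _")
proof -
  define Z where "Z n = frac_exceed (real n powr \<gamma>) (T (n+1))" for n
  have "eventually (\<lambda>n. \<forall>m\<le>n+1. \<forall>c\<ge>real n powr \<gamma> / 2.
      expectation (frac_exceed c (T m)) \<le> real n powr (-3)) sequentially"
    by (rule eventually_expectation_frac_exceed_le[OF _ C \<beta> \<gamma>]) (fact tail)
  then have "eventually (\<lambda>n. expectation (Z n) \<le> real n powr (-3)) sequentially"
    by eventually_elim (auto simp: Z_def)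
  then have "AE w in M. (\<lambda>n. Z n w) \<in> o(\<lambda>n. real n powr (-4/3))"
    unfolding Z_def by (intro AE_smallo_if_expectation_le integrable_frac_exceed frac_exceed_bounds)
  moreover have "AE w in M. \<forall>n. 0 \<le> ?r n w \<and> ?r n w \<le> Z n w"
    unfolding AE_all_countable Z_def by (intro allI cond_prob_nrm_X_UU_le T_ge_1)
  ultimately show ?thesis
  proof eventually_elim
    case (elim w)
    then show ?case
      by (intro smallo_if_eventually_le[OF _ elim(1)]) auto
  qed
qed

lemma incr_tail_smallo:
  assumes tail: "\<And>x. x \<ge> x\<^sub>0 \<Longrightarrow> incr_tail x \<le> C * x powr (-\<beta>)"
    and C: "C \<ge> 0" and \<beta>: "\<beta> > 0" and \<gamma>: "\<gamma> \<ge> 2" "\<gamma> * \<beta> \<ge> 6 + \<beta>"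
  shows "(\<lambda>n. incr_tail (real n powr \<gamma> / 2)) \<in> o(\<lambda>n. real n powr (-4/3))"
proof (rule smallo_if_eventually_le)
  have "eventually (\<lambda>n. (real n + 1) * incr_tail (real n powr \<gamma> / (2 * (real n + 1)))
      \<le> real n powr (-3) / 2) sequentially"
    by (rule eventually_powr_tail_small[OF _ C \<beta> \<gamma>]) (fact tail)
  then show "eventually (\<lambda>n. 0 \<le> incr_tail (real n powr \<gamma> / 2) \<and>
      incr_tail (real n powr \<gamma> / 2) \<le> real n powr (-3)) sequentially"
  proof eventually_elim
    case (elim n)
    let ?t = "incr_tail (real n powr \<gamma> / (2 * (real n + 1)))"
    have "incr_tail (real n powr \<gamma> / 2) \<le> ?t"
      by (intro incr_tail_antimono divide_left_mono) auto
    moreover have "1 * ?t \<le> (real n + 1) * ?t"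
      by (intro mult_right_mono) auto
    ultimately show ?case
      using elim incr_tail_nonneg[of "real n powr \<gamma> / 2"] by linarith
  qed
  show "(\<lambda>n. real n powr (-3)) \<in> o(\<lambda>n. real n powr (-4/3))"
    by real_asymp
qed

lemma AE_cond_prob_nrm_X_UU_plus_smallo:
  assumes tail: "\<And>x. x \<ge> x\<^sub>0 \<Longrightarrow> incr_tail x \<le> C * x powr (-\<beta>)"
    and C: "C \<ge> 0" and \<beta>: "\<beta> > 0" and \<gamma>: "\<gamma> \<ge> 2" "\<gamma> * \<beta> \<ge> 6 + \<beta>"
  shows "AE \<omega> in M. (\<lambda>n. real_cond_exp M sigma_X
          (indicator {\<omega>'\<in>space M.
             nrm (X (UU (T n) \<omega>') \<omega>' + (if R n \<omega>' then Dt n \<omega>' else 0)) > real n powr \<gamma>}) \<omega>)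
         \<in> o(\<lambda>n. real n powr (-4/3))"
    (is "AE \<omega> in M. (\<lambda>n. ?r n \<omega>) \<in> _")
proof -
  define Z where "Z n = frac_exceed (real n powr \<gamma> / 2) (T n)" for n
  have "eventually (\<lambda>n. \<forall>m\<le>n+1. \<forall>c\<ge>real n powr \<gamma> / 2.
      expectation (frac_exceed c (T m)) \<le> real n powr (-3)) sequentially"
    by (rule eventually_expectation_frac_exceed_le[OF _ C \<beta> \<gamma>]) (fact tail)
  then have "eventually (\<lambda>n. expectation (Z n) \<le> real n powr (-3)) sequentially"
    by eventually_elim (auto simp: Z_def)
  then have "AE w in M. (\<lambda>n. Z n w) \<in> o(\<lambda>n. real n powr (-4/3))"
    unfolding Z_def by (intro AE_smallo_if_expectation_le integrable_frac_exceed frac_exceed_bounds)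
  moreover have "AE w in M. \<forall>n. 1 \<le> n \<longrightarrow> 0 \<le> ?r n w \<and> ?r n w \<le> Z n w + incr_tail (real n powr \<gamma> / 2)"
    unfolding AE_all_countable Z_def
  proof
    fix n
    show "AE w in M. 1 \<le> n \<longrightarrow> 0 \<le> ?r n w \<and>
        ?r n w \<le> frac_exceed (real n powr \<gamma> / 2) (T n) w + incr_tail (real n powr \<gamma> / 2)"
    proof (cases "1 \<le> n")
      case True
      show ?thesis
        using cond_prob_nrm_X_UU_plus_le[OF T_ge_1[of n] True, of "real n powr \<gamma>"] by eventually_elim simp
    qed simp
  qed
  ultimately show ?thesis
  proof eventually_elim
    case (elim w)
    have "eventually (\<lambda>n. 0 \<le> ?r n w \<and> ?r n w \<le> Z n w + incr_tail (real n powr \<gamma> / 2)) sequentially"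
      using elim(2) by (intro eventually_sequentiallyI[of 1]) blast
    then show ?case
      by (rule smallo_if_eventually_le)
        (rule sum_in_smallo(1)[OF elim(1) incr_tail_smallo[OF tail C \<beta> \<gamma>]])
  qed
qed

lemma AE_cond_probs_smallo:
  assumes conv: scaled_sums_converge
  shows "\<exists>\<gamma>0. \<forall>\<gamma>\<ge>\<gamma>0. AE \<omega> in M.
       (\<lambda>n. real_cond_exp M sigma_X
          (indicator {\<omega>'\<in>space M. nrm (X (UU (T (n+1)) \<omega>') \<omega>') > real n powr \<gamma>}) \<omega>)
         \<in> o(\<lambda>n. real n powr (-4/3)) \<and>
       (\<lambda>n. real_cond_exp M sigma_X
          (indicator {\<omega>'\<in>space M.
             nrm (X (UU (T n) \<omega>') \<omega>' + (if R n \<omega>' then Dt n \<omega>' else 0)) > real n powr \<gamma>}) \<omega>)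
         \<in> o(\<lambda>n. real n powr (-4/3))"
    (is "\<exists>\<gamma>0. \<forall>\<gamma>\<ge>\<gamma>0. ?P \<gamma>")
proof -
  obtain C \<beta> x\<^sub>0 where C: "0 < C" and \<beta>: "0 < \<beta>"
    and tail: "\<And>x. x \<ge> x\<^sub>0 \<Longrightarrow> incr_tail x \<le> C * x powr (-\<beta>)"
    using incr_tail_powr_bound[OF conv] by blast
  have "?P \<gamma>" if "max 2 ((6 + \<beta>) / \<beta>) \<le> \<gamma>" for \<gamma>
  proof -
    have \<gamma>: "\<gamma> \<ge> 2" "\<gamma> * \<beta> \<ge> 6 + \<beta>"
      using that \<beta> by (auto simp: field_simps)
    from C tail \<beta> \<gamma> show ?thesis
      by (intro AE_conjI AE_cond_prob_nrm_X_UU_smallo AE_cond_prob_nrm_X_UU_plus_smallo) auto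
  qed
  then show ?thesis
    by blast
qed

end

theorem lemma2:
  fixes M :: "'m measure"
    and nrm :: "'a::euclidean_space \<Rightarrow> real"
    and Delta :: "nat \<Rightarrow> 'm \<Rightarrow> 'a"
    and U :: "nat \<Rightarrow> 'm \<Rightarrow> nat"
    and X :: "nat \<Rightarrow> 'm \<Rightarrow> 'a"
    and R :: "nat \<Rightarrow> 'm \<Rightarrow> bool"
    and Dt :: "nat \<Rightarrow> 'm \<Rightarrow> 'a"
    and UU :: "nat \<Rightarrow> 'm \<Rightarrow> nat"
  assumes P: "prob_space M"
    \<comment> \<open>an arbitrary norm on R^d\<close>
    and nrm_zero: "\<And>x. nrm x = 0 \<longleftrightarrow> x = 0"
    and nrm_triangle: "\<And>x y. nrm (x + y) \<le> nrm x + nrm y"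
    and nrm_scale: "\<And>c x. nrm (c *\<^sub>R x) = \<bar>c\<bar> * nrm x"
    \<comment> \<open>measurability of the primitive random variables\<close>
    and Delta_meas: "\<And>i. Delta i \<in> borel_measurable M"
    and U_meas: "\<And>i. U i \<in> measurable M (count_space UNIV)"
    and R_meas: "\<And>n. R n \<in> measurable M (count_space UNIV)"
    and Dt_meas: "\<And>n. Dt n \<in> borel_measurable M"
    and UU_meas: "\<And>n. UU n \<in> measurable M (count_space UNIV)"
    \<comment> \<open>distributions\<close>
    and Delta_iid: "\<And>i. 1 \<le> i \<Longrightarrow> distr M borel (Delta i) = distr M borel (Delta 1)"
    and Dt_dist: "\<And>n. 1 \<le> n \<Longrightarrow> distr M borel (Dt n) = distr M borel (Delta 1)"
    and U_dist: "\<And>n. 2 \<le> n \<Longrightarrow>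
        distr M (count_space UNIV) (U n) = measure_pmf (pmf_of_set {1..n-1})"
    and U_range: "\<And>n \<omega>. 2 \<le> n \<Longrightarrow> \<omega> \<in> space M \<Longrightarrow> U n \<omega> \<in> {1..n-1}"
    and R_dist: "\<And>n. 1 \<le> n \<Longrightarrow> distr M (count_space UNIV) (R n) =
        measure_pmf (bernoulli_pmf ((real (T (n+1)) - real (T n)) / real (T (n+1))))"
    and UU_dist: "\<And>n. 1 \<le> n \<Longrightarrow>
        distr M (count_space UNIV) (UU n) = measure_pmf (pmf_of_set {1..n})"
    \<comment> \<open>mutual independence of all primitive random variables\<close>
    and indep: "prob_space.indep_sets M
        (\<lambda>i. case i of
            IDelta k \<Rightarrow> events_of M borel (Delta k)
          | IU k \<Rightarrow> events_of M (count_space UNIV) (U k)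
          | IR k \<Rightarrow> events_of M (count_space UNIV) (R k)
          | IDt k \<Rightarrow> events_of M borel (Dt k)
          | IUU k \<Rightarrow> events_of M (count_space UNIV) (UU k))
        {i. valid_idx i}"
    \<comment> \<open>the recursive definition of X\<close>
    and X1: "\<And>\<omega>. \<omega> \<in> space M \<Longrightarrow> X 1 \<omega> = Delta 1 \<omega>"
    and Xn: "\<And>n \<omega>. 2 \<le> n \<Longrightarrow> \<omega> \<in> space M \<Longrightarrow> X n \<omega> = X (U n \<omega>) \<omega> + Delta n \<omega>"
    \<comment> \<open>standing assumption: n^(-alpha) (Delta_1+...+Delta_n) converges in distribution
        to some random variable Lambda (with law L)\<close>
    and conv: "\<exists>\<alpha>>0. \<exists>L :: 'a measure. prob_space L \<and> sets L = sets borel \<and>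
        (\<forall>f :: 'a \<Rightarrow> real. continuous_on UNIV f \<and> bounded (range f) \<longrightarrow>
          (\<lambda>n. \<integral>\<omega>. f ((real n powr (-\<alpha>)) *\<^sub>R (\<Sum>i=1..n. Delta i \<omega>)) \<partial>M)
            \<longlonglongrightarrow> (\<integral>x. f x \<partial>L))"
  shows "\<exists>\<gamma>0. \<forall>\<gamma>\<ge>\<gamma>0.
    (let F = sigma (space M)
           ({X i -` A \<inter> space M | i A. 1 \<le> i \<and> A \<in> sets borel} \<union>
            {U i -` A \<inter> space M | i A. 2 \<le> i \<and> A \<in> sets (count_space UNIV)})
     in AE \<omega> in M.
       (\<lambda>n. real_cond_exp M F
          (indicator {\<omega>'\<in>space M. nrm (X (UU (T (n+1)) \<omega>') \<omega>') > real n powr \<gamma>}) \<omega>)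
         \<in> o(\<lambda>n. real n powr (-4/3)) \<and>
       (\<lambda>n. real_cond_exp M F
          (indicator {\<omega>'\<in>space M.
             nrm (X (UU (T n) \<omega>') \<omega>' + (if R n \<omega>' then Dt n \<omega>' else 0)) > real n powr \<gamma>}) \<omega>)
         \<in> o(\<lambda>n. real n powr (-4/3)))"
proof -
  interpret tree_indexed_walk M nrm Delta U X R Dt UU
    unfolding tree_indexed_walk_def tree_indexed_walk_axioms_def vector_norm_def
    using assms by blast
  show ?thesis
    using AE_cond_probs_smallo[OF conv[folded scaled_sums_converge_def]]
    unfolding Let_def sigma_X_def .
qed

end
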